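(* Let $a,b\ge 3$ and $k\ge 2$ be integers and let $G=CB(k,a,b)$ be the cycle barbell. Then \begin{align*} \mathscr{K}_e(G)=\frac{1}{a+b+k-1}\Bigg[&\frac{(a+1)(a-1)}{6}\bigl(a+2(b+k-1)\bigr)+\frac{(b+1)(b-1)}{6}\bigl(b+2(a+k-1)\bigr)\\ &+(a+b)(k-1)^2+\frac{(k-1)(2k^2-4k+3)}{6}+2ab(k-1)\Bigg]+a+b+k. \end{align*}
   Context: The cycle barbell $CB(k,a,b)$ is the graph obtained from a cycle $C_a$, a path $P_k$ on $k$ vertices and a cycle $C_b$ by identifying one endpoint of the path with a vertex of $C_a$ and the other endpoint with a vertex of $C_b$. It has $a+b+k-2$ vertices and $a+b+k-1$ edges. Kemeny's constant of an irreducible finite Markov chain with transition matrix $P$ whose eigenvalues (with multiplicity) are $1=\rho_1,\rho_2,\dots,\rho_N$ (with $1$ simple) is $\mathscr{K}(P)=\sum_{i=2}^{N}\frac{1}{1-\rho_i}$. $\mathscr{K}_e(G)$ is Kemeny's constant of the simple random walk on the arcs of $G$ (ordered pairs $(u,v)$ with $\{u,v\}$ an edge), where from $(u,v)$ one moves to $(v,w)$ with probability $1/\deg(v)$ for each neighbor $w$ of $v$. *)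

theory Defs
  imports "Jordan_Normal_Form.Char_Poly" "HOL-Computational_Algebra.Fundamental_Theorem_Algebra" "HOL-Library.Product_Lexorder"
begin

(* Simple graphs on nat vertices, given by a symmetric irreflexive adjacency predicate. *)

(* Cycle barbell CB(k,a,b), vertices 0 .. a+b+k-3:
   C_a on vertices 0..a-1 (i ~ (i+1) mod a);
   path P_k: 0 = p_0, p_j = a+j-1 (1 <= j <= k-1), consecutive p_j ~ p_{j+1};
   C_b on vertices c..c+b-1 with c = a+k-2 (c+i ~ c+((i+1) mod b));
   the path endpoint p_{k-1} = c is the identified vertex of C_b,
   p_0 = 0 the identified vertex of C_a. *)

definition cb_vertices :: "nat \<Rightarrow> nat \<Rightarrow> nat \<Rightarrow> nat set" where
  "cb_vertices k a b = {..<a+b+k-2}"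

definition cb_path_vertex :: "nat \<Rightarrow> nat \<Rightarrow> nat" where
  "cb_path_vertex a j = (if j = 0 then 0 else a + j - 1)"

definition cb_edge_dir :: "nat \<Rightarrow> nat \<Rightarrow> nat \<Rightarrow> nat \<Rightarrow> nat \<Rightarrow> bool" where
  "cb_edge_dir k a b u v \<longleftrightarrow>
     (\<exists>i<a. u = i \<and> v = (i + 1) mod a)
   \<or> (\<exists>j. j + 1 < k \<and> u = cb_path_vertex a j \<and> v = cb_path_vertex a (j + 1))
   \<or> (\<exists>i<b. u = a + k - 2 + i \<and> v = a + k - 2 + (i + 1) mod b)"

definition cb_adj :: "nat \<Rightarrow> nat \<Rightarrow> nat \<Rightarrow> nat \<Rightarrow> nat \<Rightarrow> bool" where
  "cb_adj k a b u v \<longleftrightarrow> cb_edge_dir k a b u v \<or> cb_edge_dir k a b v u"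

definition arcs :: "nat set \<Rightarrow> (nat \<Rightarrow> nat \<Rightarrow> bool) \<Rightarrow> (nat \<times> nat) set" where
  "arcs V adj = {(u, v). u \<in> V \<and> v \<in> V \<and> adj u v}"

definition gdeg :: "nat set \<Rightarrow> (nat \<Rightarrow> nat \<Rightarrow> bool) \<Rightarrow> nat \<Rightarrow> nat" where
  "gdeg V adj v = card {w \<in> V. adj v w}"

definition arc_walk_matrix :: "nat set \<Rightarrow> (nat \<Rightarrow> nat \<Rightarrow> bool) \<Rightarrow> complex mat" where
  "arc_walk_matrix V adj =
     (let L = sorted_list_of_set (arcs V adj) in
      mat (length L) (length L)
        (\<lambda>(i, j). if snd (L ! i) = fst (L ! j)
                  then 1 / of_nat (gdeg V adj (snd (L ! i))) else 0))"

definition kemeny :: "complex mat \<Rightarrow> complex" where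
  "kemeny P = (\<Sum>\<rho>\<in># proots (char_poly P) - {#1#}. 1 / (1 - \<rho>))"

definition kemeny_edge :: "nat set \<Rightarrow> (nat \<Rightarrow> nat \<Rightarrow> bool) \<Rightarrow> complex" where
  "kemeny_edge V adj = kemeny (arc_walk_matrix V adj)"

end

(*
  Kemeny's constant is read off an explicit solution of the Poisson equation of the walk. For a
  stochastic matrix P and a vector \<pi> with entries summing to 1, the matrix I - P + 1 \<pi>^T has the
  eigenvalues 1 and 1 - \<rho>, where \<rho> runs over the eigenvalues of P with one copy of 1 removed,
  so K(P) = tr (I - P + 1 \<pi>^T)^-1 - 1; a solution X of (I - P) X = I - 1 \<pi>^T gives this inverse
  explicitly, whence K(P) = tr X - \<pi>^T X 1.

  For the walk on the arcs of a graph such an X comes from any grounded Green's function G of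
  the vertex Laplacian (L G(-,q) = \<delta>_q - \<delta>_r): with m arcs and n vertices,
  K_e = m - n + \<Sum>_t deg t G(t,t) - (1/m) \<Sum>_t \<Sum>_v deg t deg v G(t,v).
  On the cycle barbell G is obtained by gluing the grounded Green's functions
  min(p,q) (l - max(p,q)) / l of the two cycles and min(p,q) of the path at the cut vertices,
  and both sums are evaluated in closed form.
*)

theory Submission
  imports Defs "Jordan_Normal_Form.Schur_Decomposition"
begin

lemma poly_eqI_cofinite:
  fixes p q :: "'a::{idom, ring_char_0} poly"
  assumes "finite F" and "\<And>x. x \<notin> F \<Longrightarrow> poly p x = poly q x"
  shows "p = q"
proof (rule ccontr)
  assume "p \<noteq> q"
  then have "finite {x. poly (p - q) x = 0}" by (intro poly_roots_finite) simp
  moreover have "UNIV - F \<subseteq> {x. poly (p - q) x = 0}" using assms(2) by auto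
  ultimately have "finite (UNIV :: 'a set)"
    using assms(1) by (metis Diff_infinite_finite finite_subset)
  then show False using infinite_UNIV_char_0 by blast
qed

lemma proots_prod_linear_factors: "proots (\<Prod>e\<leftarrow>es. [:- e, 1:]) = mset (es :: 'a::idom list)"
proof (induction es)
  case (Cons e es)
  have "(\<Prod>e\<leftarrow>es. [:- e, 1:]) \<noteq> 0" by (auto simp: prod_list_zero_iff)
  then show ?case using Cons.IH by (simp add: proots_mult del: mult_pCons_left)
qed simp

lemma index_mult_mat_sum:
  assumes "A \<in> carrier_mat n m" and "B \<in> carrier_mat m p" and "i < n" and "j < p"
  shows "(A * B) $$ (i,j) = (\<Sum>k<m. A $$ (i,k) * B $$ (k,j))"
  using assms by (auto simp: scalar_prod_def atLeast0LessThan intro!: sum.cong)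

lemma inverse_upper_triangular_diag:
  fixes T W :: "'a::field mat"
  assumes T: "T \<in> carrier_mat N N" and W: "W \<in> carrier_mat N N"
    and ut: "upper_triangular T" and TW: "T * W = 1\<^sub>m N" and i: "i < N"
  shows "W $$ (i,i) = 1 / T $$ (i,i)"
proof -
  have "det T * det W = 1" using det_mult[OF T W] TW by simp
  then have "prod_list (diag_mat T) \<noteq> 0"
    using det_upper_triangular[OF ut T] by (metis mult_zero_left zero_neq_one)
  then have diag_nz: "T $$ (l,l) \<noteq> 0" if "l < N" for l
    using that T by (auto simp: diag_mat_def prod_list_zero_iff)
  have row: "(T * W) $$ (l,j) = T $$ (l,l) * W $$ (l,j)"
    if "l < N" "j < N" and below: "\<And>k. l < k \<Longrightarrow> k < N \<Longrightarrow> W $$ (k,j) = 0" for l j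
  proof -
    have "(T * W) $$ (l,j) = (\<Sum>k<N. T $$ (l,k) * W $$ (k,j))"
      using index_mult_mat_sum[OF T W] that by simp
    also have "\<dots> = T $$ (l,l) * W $$ (l,j) + (\<Sum>k\<in>{..<N} - {l}. T $$ (l,k) * W $$ (k,j))"
      using that by (simp add: sum.remove)
    also have "(\<Sum>k\<in>{..<N} - {l}. T $$ (l,k) * W $$ (k,j)) = 0"
    proof (rule sum.neutral, intro ballI)
      fix k assume "k \<in> {..<N} - {l}"
      then consider "k < l" | "l < k" "k < N" by force
      then show "T $$ (l,k) * W $$ (k,j) = 0"
        by cases (use ut T \<open>l < N\<close> below in \<open>auto dest: upper_triangularD\<close>)
    qed
    finally show ?thesis by simp
  qed
  have lower_zero: "W $$ (l,j) = 0" if "j < l" "l < N" for l j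
    using that
  proof (induction "N - l" arbitrary: l rule: less_induct)
    case less
    have "T $$ (l,l) * W $$ (l,j) = (T * W) $$ (l,j)"
      using less by (intro row[symmetric]) auto
    also have "\<dots> = 0" using TW less by simp
    finally show ?case using diag_nz less by simp
  qed
  have "T $$ (i,i) * W $$ (i,i) = 1"
    using row[of i i] TW i lower_zero by simp
  then show ?thesis using diag_nz[OF i] by (simp add: field_simps)
qed

definition trace_mat :: "'a::comm_ring_1 mat \<Rightarrow> 'a" where
  "trace_mat A = (\<Sum>i<dim_row A. A $$ (i,i))"

lemma trace_mat_mult_comm:
  fixes A B :: "'a::comm_ring_1 mat"
  assumes A: "A \<in> carrier_mat n m" and B: "B \<in> carrier_mat m n"
  shows "trace_mat (A * B) = trace_mat (B * A)"
proof -
  have "trace_mat (A * B) = (\<Sum>i<n. \<Sum>k<m. A $$ (i,k) * B $$ (k,i))"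
    unfolding trace_mat_def using A B
      by (auto simp: scalar_prod_def atLeast0LessThan intro!: sum.cong)
  also have "\<dots> = (\<Sum>k<m. \<Sum>i<n. B $$ (k,i) * A $$ (i,k))"
    by (subst sum.swap) (simp add: mult.commute)
  also have "\<dots> = trace_mat (B * A)"
    unfolding trace_mat_def using A B
      by (auto simp: scalar_prod_def atLeast0LessThan intro!: sum.cong)
  finally show ?thesis .
qed

lemma sylvester_det_identity:
  fixes H :: "'a::idom mat"
  assumes H: "H \<in> carrier_mat N n" and C: "C \<in> carrier_mat n N"
  shows "det (1\<^sub>m N + H * C) = det (1\<^sub>m n + C * H)"
proof -
  define E where "E = four_block_mat (1\<^sub>m N) H (- C) (1\<^sub>m n)"
  have E: "E \<in> carrier_mat (N+n) (N+n)" unfolding E_def using H C by auto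
  have E1: "E * four_block_mat (1\<^sub>m N) (0\<^sub>m N n) C (1\<^sub>m n)
      = four_block_mat (1\<^sub>m N + H * C) H (0\<^sub>m n N) (1\<^sub>m n)"
    unfolding E_def using H C by (subst mult_four_block_mat[of _ N N _ n _ n]) auto
  have E2: "E * four_block_mat (1\<^sub>m N) (- H) (0\<^sub>m n N) (1\<^sub>m n)
      = four_block_mat (1\<^sub>m N) (0\<^sub>m N n) (- C) (1\<^sub>m n + C * H)"
    unfolding E_def using H C by (subst mult_four_block_mat[of _ N N _ n _ n]) auto
  have "det E = det (1\<^sub>m N + H * C)"
    using arg_cong[OF E1, of det] det_mult[OF E, of "four_block_mat (1\<^sub>m N) (0\<^sub>m N n) C (1\<^sub>m n)"] H C
    by (simp add: det_four_block_mat_upper_right_zero[of _ N _ n]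
        det_four_block_mat_lower_left_zero[of _ N _ n])
  moreover have "det E = det (1\<^sub>m n + C * H)"
    using arg_cong[OF E2, of det] det_mult[OF E, of "four_block_mat (1\<^sub>m N) (- H) (0\<^sub>m n N) (1\<^sub>m n)"] H C
    by (simp add: det_four_block_mat_upper_right_zero[of _ N _ n]
        det_four_block_mat_lower_left_zero[of _ N _ n])
  ultimately show ?thesis by simp
qed

lemma det_one_plus_rank_one:
  fixes \<alpha> :: "'a::idom" and \<pi> :: "nat \<Rightarrow> 'a"
  shows "det (mat N N (\<lambda>(i,j). (if i = j then 1 else 0) + \<alpha> * \<pi> j)) = 1 + \<alpha> * (\<Sum>j<N. \<pi> j)"
proof -
  define H where "H = mat N 1 (\<lambda>_. \<alpha>)"
  define C where "C = mat 1 N (\<lambda>(_,j). \<pi> j)"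
  have "mat N N (\<lambda>(i,j). (if i = j then 1 else 0) + \<alpha> * \<pi> j) = 1\<^sub>m N + H * C"
    by (rule eq_matI) (auto simp: H_def C_def scalar_prod_def)
  moreover have "1\<^sub>m 1 + C * H = mat 1 1 (\<lambda>_. 1 + \<alpha> * (\<Sum>j<N. \<pi> j))"
    by (rule eq_matI)
      (auto simp: H_def C_def scalar_prod_def atLeast0LessThan sum_distrib_left mult.commute)
  moreover have "H \<in> carrier_mat N 1" "C \<in> carrier_mat 1 N" unfolding H_def C_def by auto
  ultimately show ?thesis using sylvester_det_identity[of H N 1 C] by (simp add: det_single)
qed

lemma poly_char_poly_eq_det:
  fixes A :: "'a::field mat"
  assumes A: "A \<in> carrier_mat N N"
  shows "poly (char_poly A) y = det (mat N N (\<lambda>(i,j). (if i = j then y else 0) - A $$ (i,j)))"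
proof -
  have "- char_matrix A y = mat N N (\<lambda>(i,j). (if i = j then y else 0) - A $$ (i,j))"
    by (rule eq_matI) (use A in \<open>auto simp: char_matrix_def\<close>)
  then show ?thesis using char_poly_matrix[OF A] by simp
qed

lemma trace_inverse_eq_sum_inverse_roots:
  fixes B Z :: "complex mat"
  assumes B: "B \<in> carrier_mat N N" and Z: "Z \<in> carrier_mat N N" and BZ: "B * Z = 1\<^sub>m N"
  shows "trace_mat Z = (\<Sum>f\<in>#proots (char_poly B). 1 / f)"
proof -
  obtain fs where cp: "char_poly B = (\<Prod>f\<leftarrow>fs. [:- f, 1:])"
    using char_poly_factorized[OF B] by blast
  obtain T S S' where "schur_decomposition B fs = (T, S, S')" by (metis prod_cases3)
  from schur_decomposition[OF B cp this]
  have sim: "similar_mat_wit B T S S'" and ut: "upper_triangular T" and diag: "diag_mat T = fs"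
    by auto
  from sim have T: "T \<in> carrier_mat N N" and S: "S \<in> carrier_mat N N" and S': "S' \<in> carrier_mat N N"
    and SS': "S * S' = 1\<^sub>m N" and S'S: "S' * S = 1\<^sub>m N" and BT: "B = S * T * S'"
    unfolding similar_mat_wit_def Let_def using B by auto
  have Tii: "T $$ (i,i) = fs ! i" if "i < N" for i
    using diag T that by (auto simp: diag_mat_def)
  define W where "W = S' * Z * S"
  have W: "W \<in> carrier_mat N N" unfolding W_def using S S' Z by auto
  have TB: "T = S' * B * S" using similar_mat_witD(3)[OF refl similar_mat_wit_sym[OF sim]] .
  note assoc = assoc_mult_mat[of _ N N _ N _ N]
  have "T * W = S' * B * (S * S') * Z * S"
    unfolding TB W_def using S S' B Z by (simp add: assoc)
  also have "\<dots> = S' * (B * Z) * S"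
    unfolding SS' using S S' B Z by (simp add: assoc)
  also have "\<dots> = 1\<^sub>m N"
    unfolding BZ using S S' S'S by simp
  finally have TW: "T * W = 1\<^sub>m N" .
  have "trace_mat Z = trace_mat (S' * (Z * S))"
    using trace_mat_mult_comm[of S' N N "Z * S"] S S' Z SS' by (simp add: assoc)
  also have "\<dots> = trace_mat W"
    unfolding W_def using S S' Z by (simp add: assoc)
  also have "\<dots> = (\<Sum>i<N. 1 / fs ! i)"
    unfolding trace_mat_def using W Tii inverse_upper_triangular_diag[OF T W ut TW] by simp
  also have "\<dots> = (\<Sum>f\<leftarrow>fs. 1 / f)"
    using diag T by (auto simp: sum_list_sum_nth atLeast0LessThan diag_mat_def)
  also have "\<dots> = (\<Sum>f\<in>#proots (char_poly B). 1 / f)"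
    unfolding cp proots_prod_linear_factors by (metis mset_map sum_mset_sum_list)
  finally show ?thesis .
qed

lemma char_poly_deflation_eval:
  fixes P :: "'a::field mat" and \<pi> :: "nat \<Rightarrow> 'a"
  assumes P: "P \<in> carrier_mat N N"
    and rows: "\<And>i. i < N \<Longrightarrow> (\<Sum>j<N. P $$ (i,j)) = 1"
    and \<pi>: "(\<Sum>j<N. \<pi> j) = 1"
    and x: "x \<noteq> 1"
  shows "poly (char_poly (mat N N (\<lambda>(i,j). (if i = j then 1 else 0) - P $$ (i,j) + \<pi> j))) x * x
       = (x - 1) * det (mat N N (\<lambda>(i,j). (if i = j then x - 1 else 0) + P $$ (i,j)))"
proof -
  define B where "B = mat N N (\<lambda>(i,j). (if i = j then 1 else 0) - P $$ (i,j) + \<pi> j)"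
  define M where "M = mat N N (\<lambda>(i,j). (if i = j then x - 1 else 0) + P $$ (i,j))"
  define D where "D = mat N N (\<lambda>(i,j). (if i = j then x else 0) - B $$ (i,j))"
  define E where "E = mat N N (\<lambda>(i,j). (if i = j then 1 else 0) + 1 / (x - 1) * \<pi> j)"
  have carrier: "B \<in> carrier_mat N N" "D \<in> carrier_mat N N" "E \<in> carrier_mat N N"
    unfolding B_def D_def E_def by auto
  have rows_M: "(\<Sum>k<N. M $$ (i,k)) = x" if "i < N" for i
  proof -
    have "(\<Sum>k<N. M $$ (i,k)) = (\<Sum>k<N. (if i = k then x - 1 else 0) + P $$ (i,k))"
      using that by (intro sum.cong) (auto simp: M_def)
    then show ?thesis using that rows by (simp add: sum.distrib)
  qed
  \<comment> \<open>\<open>D = M - 1 \<pi>\<^sup>T\<close> and \<open>M 1 = x 1\<close>, so \<open>D (I + 1 \<pi>\<^sup>T / (x - 1)) = M\<close>.\<close>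
  have "D * E = M"
  proof (rule eq_matI)
    fix i j assume "i < dim_row M" "j < dim_col M"
    then have i: "i < N" and j: "j < N" by (auto simp: M_def)
    have "(D * E) $$ (i,j) = (\<Sum>k<N. (M $$ (i,k) - \<pi> k)
      * ((if k = j then 1 else 0) + 1 / (x - 1) * \<pi> j))"
      using index_mult_mat_sum[OF carrier(2,3) i j] i j
      by (auto simp: D_def E_def M_def B_def intro!: sum.cong)
    also have "\<dots> = (M $$ (i,j) - \<pi> j) + 1 / (x - 1) * \<pi> j * ((\<Sum>k<N. M $$ (i,k)) - (\<Sum>k<N. \<pi> k))"
      using j by (simp add: algebra_simps sum.distrib sum_subtractf sum_distrib_left sum_distrib_right
          sum_divide_distrib if_distrib[of "\<lambda>t. _ * t"] if_distrib[of "\<lambda>t. t * _"] cong: if_cong)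
    also have "\<dots> = M $$ (i,j)" using rows_M[OF i] \<pi> x by simp
    finally show "(D * E) $$ (i,j) = M $$ (i,j)" .
  qed (auto simp: D_def E_def M_def)
  then have "det D * det E = det M" using det_mult[OF carrier(2,3)] by simp
  moreover have "det E = x / (x - 1)"
    unfolding E_def det_one_plus_rank_one \<pi> using x by (simp add: field_simps)
  moreover have "poly (char_poly B) x = det D"
    unfolding D_def by (rule poly_char_poly_eq_det[OF carrier(1)])
  ultimately show ?thesis using x unfolding B_def M_def by (simp add: field_simps)
qed

lemma char_poly_deflation:
  fixes P :: "'a::field_char_0 mat" and \<pi> :: "nat \<Rightarrow> 'a"
  assumes P: "P \<in> carrier_mat N N"
    and rows: "\<And>i. i < N \<Longrightarrow> (\<Sum>j<N. P $$ (i,j)) = 1"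
    and \<pi>: "(\<Sum>j<N. \<pi> j) = 1"
    and cp: "char_poly P = (\<Prod>e\<leftarrow>es. [:- e, 1:])" and len: "length es = N"
  shows "char_poly (mat N N (\<lambda>(i,j). (if i = j then 1 else 0) - P $$ (i,j) + \<pi> j)) * [:0, 1:]
    = [:- 1, 1:] * (\<Prod>f\<leftarrow>map (\<lambda>e. 1 - e) es. [:- f, 1:])" (is "char_poly ?B * _ = _ * ?Q")
proof (rule poly_eqI_cofinite[of "{1}"])
  fix x :: 'a assume "x \<notin> {1}"
  have "mat N N (\<lambda>(i,j). (if i = j then x - 1 else 0) + P $$ (i,j))
      = (- 1) \<cdot>\<^sub>m mat N N (\<lambda>(i,j). (if i = j then 1 - x else 0) - P $$ (i,j))"
    by (rule eq_matI) auto
  then have "det (mat N N (\<lambda>(i,j). (if i = j then x - 1 else 0) + P $$ (i,j)))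
      = (- 1) ^ N * poly (char_poly P) (1 - x)"
    by (simp add: poly_char_poly_eq_det[OF P])
  also have "\<dots> = poly ?Q x"
    unfolding cp using len[symmetric]
    by (induction es arbitrary: N) (simp_all add: poly_prod_list o_def algebra_simps)
  finally show "poly (char_poly ?B * [:0, 1:]) x = poly ([:- 1, 1:] * ?Q) x"
    using char_poly_deflation_eval[OF P rows \<pi>, of x] \<open>x \<notin> {1}\<close> by (simp add: algebra_simps)
qed simp

lemma proots_char_poly_deflation:
  fixes P :: "complex mat" and \<pi> :: "nat \<Rightarrow> complex"
  assumes P: "P \<in> carrier_mat N N"
    and rows: "\<And>i. i < N \<Longrightarrow> (\<Sum>j<N. P $$ (i,j)) = 1"
    and \<pi>: "(\<Sum>j<N. \<pi> j) = 1"
  shows "proots (char_poly (mat N N (\<lambda>(i,j). (if i = j then 1 else 0) - P $$ (i,j) + \<pi> j)))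
         = add_mset 1 (image_mset (\<lambda>e. 1 - e) (proots (char_poly P) - {#1#}))"
proof -
  define B where "B = mat N N (\<lambda>(i,j). (if i = j then 1 else 0) - P $$ (i,j) + \<pi> j)"
  obtain es where cp: "char_poly P = (\<Prod>e\<leftarrow>es. [:- e, 1:])" and len: "length es = N"
    using char_poly_factorized[OF P] by blast
  define Q where "Q = (\<Prod>f\<leftarrow>map (\<lambda>e. 1 - e) es. [:- f, 1:])"
  have "char_poly B * [:0, 1:] = [:- 1, 1:] * Q"
    unfolding B_def Q_def by (rule char_poly_deflation[OF P rows \<pi> cp len])
  then have "proots (char_poly B * [:0, 1:]) = proots ([:- 1, 1:] * Q)" by simp
  moreover have "char_poly B \<noteq> 0"
    using degree_monic_char_poly[of B N] by (auto simp: B_def)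
  moreover have "Q \<noteq> 0" by (auto simp: Q_def prod_list_zero_iff)
  moreover have roots_Q: "proots Q = image_mset (\<lambda>e. 1 - e) (mset es)"
    unfolding Q_def proots_prod_linear_factors by simp
  ultimately have roots_B: "add_mset 0 (proots (char_poly B))
    = add_mset 1 (image_mset (\<lambda>e. 1 - e) (mset es))"
    using proots_mult[of "char_poly B" "[:0, 1:]"] proots_mult[of "[:- 1, 1:]" Q]
    by (simp add: roots_Q)
  have roots_P: "proots (char_poly P) = mset es"
    unfolding cp by (rule proots_prod_linear_factors)
  have "0 \<in># add_mset 1 (image_mset (\<lambda>e. 1 - e) (mset es))"
    unfolding roots_B[symmetric] by simp
  then have "1 \<in># proots (char_poly P)"
    unfolding roots_P by auto
  then have "mset es = add_mset 1 (proots (char_poly P) - {#1#})"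
    unfolding roots_P by simp
  then have "add_mset 0 (proots (char_poly B))
      = add_mset 0 (add_mset 1 (image_mset (\<lambda>e. 1 - e) (proots (char_poly P) - {#1#})))"
    unfolding roots_B by (simp add: add_mset_commute)
  then show "proots (char_poly B)
    = add_mset 1 (image_mset (\<lambda>e. 1 - e) (proots (char_poly P) - {#1#}))"
    by simp
qed

theorem kemeny_eq_trace_of_solution:
  fixes P X :: "complex mat" and \<pi> :: "nat \<Rightarrow> complex"
  assumes P: "P \<in> carrier_mat N N" and X: "X \<in> carrier_mat N N"
    and rows: "\<And>i. i < N \<Longrightarrow> (\<Sum>j<N. P $$ (i,j)) = 1"
    and \<pi>: "(\<Sum>j<N. \<pi> j) = 1"
    and solution: "\<And>i j. i < N \<Longrightarrow> j < N \<Longrightarrow>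
      X $$ (i,j) - (\<Sum>k<N. P $$ (i,k) * X $$ (k,j)) = (if i = j then 1 else 0) - \<pi> j"
  shows "kemeny P = trace_mat X - (\<Sum>i<N. \<Sum>j<N. \<pi> i * X $$ (i,j))"
proof -
  define B where "B = mat N N (\<lambda>(i,j). (if i = j then 1 else 0) - P $$ (i,j) + \<pi> j)"
  define c where "c j = \<pi> j - (\<Sum>l<N. \<pi> l * X $$ (l,j))" for j
  define Z where "Z = mat N N (\<lambda>(i,j). X $$ (i,j) + c j)"
  have B: "B \<in> carrier_mat N N" and Z: "Z \<in> carrier_mat N N" unfolding B_def Z_def by auto
  have "B * Z = 1\<^sub>m N"
  proof (rule eq_matI)
    fix i j assume "i < dim_row (1\<^sub>m N :: complex mat)" "j < dim_col (1\<^sub>m N :: complex mat)"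
    then have i: "i < N" and j: "j < N" by auto
    have "(B * Z) $$ (i,j) = (\<Sum>k<N. ((if i = k then 1 else 0) - P $$ (i,k) + \<pi> k)
      * (X $$ (k,j) + c j))"
      using index_mult_mat_sum[OF B Z i j] i j unfolding B_def Z_def by auto
    also have "\<dots> = X $$ (i,j) + c j - (\<Sum>k<N. P $$ (i,k) * X $$ (k,j))
        - c j * (\<Sum>k<N. P $$ (i,k)) + (\<Sum>k<N. \<pi> k * X $$ (k,j)) + c j * (\<Sum>k<N. \<pi> k)"
      using i by (simp add: algebra_simps sum.distrib sum_subtractf sum_distrib_left
          if_distrib[of "\<lambda>t. t * _"] if_distrib[of "\<lambda>t. _ * t"] cong: if_cong)
    also have "\<dots> = (if i = j then 1 else 0)"
      using solution[OF i j] rows[OF i] \<pi> unfolding c_def by (simp add: algebra_simps)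
    finally show "(B * Z) $$ (i,j) = 1\<^sub>m N $$ (i,j)" using i j by simp
  qed (auto simp: B_def Z_def)
  then have "trace_mat Z = (\<Sum>f\<in>#proots (char_poly B). 1 / f)"
    by (rule trace_inverse_eq_sum_inverse_roots[OF B Z])
  also have "\<dots> = 1 + kemeny P"
    using proots_char_poly_deflation[OF P rows \<pi>] unfolding B_def kemeny_def
    by (simp add: image_mset.compositionality o_def)
  finally have "kemeny P = trace_mat Z - 1" by simp
  also have "trace_mat Z = trace_mat X + 1 - (\<Sum>j<N. \<Sum>i<N. \<pi> i * X $$ (i,j))"
    using X \<pi> unfolding trace_mat_def Z_def c_def by (simp add: sum.distrib sum_subtractf)
  also have "(\<Sum>j<N. \<Sum>i<N. \<pi> i * X $$ (i,j)) = (\<Sum>i<N. \<Sum>j<N. \<pi> i * X $$ (i,j))"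
    by (rule sum.swap)
  finally show ?thesis by simp
qed

definition neighbours :: "nat set \<Rightarrow> (nat \<Rightarrow> nat \<Rightarrow> bool) \<Rightarrow> nat \<Rightarrow> nat set" where
  "neighbours V adj w = {z \<in> V. adj w z}"

definition graph_laplacian :: "nat set \<Rightarrow> (nat \<Rightarrow> nat \<Rightarrow> bool) \<Rightarrow> (nat \<Rightarrow> real) \<Rightarrow> nat \<Rightarrow> real" where
  "graph_laplacian V adj f w = (\<Sum>z\<in>neighbours V adj w. f w - f z)"

lemma arcs_eq_Sigma: "arcs V adj = Sigma V (neighbours V adj)"
  unfolding arcs_def neighbours_def by auto

lemma sum_neighbours_eq_sum_arcs:
  assumes "finite V" and "w \<in> V"
  shows "(\<Sum>z\<in>neighbours V adj w. h z) = (\<Sum>e\<in>arcs V adj. if fst e = w then h (snd e) else 0)"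
proof -
  have "arcs V adj \<subseteq> V \<times> V" by (auto simp: arcs_def)
  then have "finite (arcs V adj)" using assms(1) by (simp add: finite_subset)
  then have "(\<Sum>e\<in>arcs V adj. if fst e = w then h (snd e) else 0)
      = (\<Sum>e\<in>{e \<in> arcs V adj. fst e = w}. h (snd e))"
    by (rule sum.inter_filter[symmetric])
  also have "{e \<in> arcs V adj. fst e = w} = Pair w ` neighbours V adj w"
    using assms(2) by (auto simp: arcs_def neighbours_def)
  also have "(\<Sum>e\<in>Pair w ` neighbours V adj w. h (snd e)) = (\<Sum>z\<in>neighbours V adj w. h z)"
    by (subst sum.reindex) (auto simp: inj_on_def)
  finally show ?thesis by (rule sym)
qed

lemma graph_laplacian_eq:
  assumes "finite V"
  shows "graph_laplacian V adj f w = real (gdeg V adj w) * f w - (\<Sum>z\<in>neighbours V adj w. f z)"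
  unfolding graph_laplacian_def gdeg_def neighbours_def by (simp add: sum_subtractf)

lemma graph_laplacian_sum:
  "graph_laplacian V adj (\<lambda>v. \<Sum>u\<in>U. h u v) w = (\<Sum>u\<in>U. graph_laplacian V adj (h u) w)"
  unfolding graph_laplacian_def by (simp add: sum_subtractf[symmetric] sum.swap[of _ U])

lemma graph_laplacian_linear:
  "graph_laplacian V adj (\<lambda>v. \<alpha> * f v - \<beta> * g v) w
     = \<alpha> * graph_laplacian V adj f w - \<beta> * graph_laplacian V adj g w"
  unfolding graph_laplacian_def
    by (simp add: sum_distrib_left sum_subtractf[symmetric] algebra_simps)

locale grounded_green_function =
  fixes V :: "nat set" and adj :: "nat \<Rightarrow> nat \<Rightarrow> bool" and G :: "nat \<Rightarrow> nat \<Rightarrow> real" and r :: nat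
  assumes finite_vertices: "finite V"
    and root: "r \<in> V"
    and gdeg_pos: "\<And>w. w \<in> V \<Longrightarrow> gdeg V adj w > 0"
    and laplacian_green: "\<And>w q. w \<in> V \<Longrightarrow> q \<in> V \<Longrightarrow>
      graph_laplacian V adj (\<lambda>v. G v q) w = (if w = q then 1 else 0) - (if w = r then 1 else 0)"
begin

abbreviation deg :: "nat \<Rightarrow> real" where "deg w \<equiv> real (gdeg V adj w)"
abbreviation num_arcs :: real where "num_arcs \<equiv> real (card (arcs V adj))"

lemma finite_neighbours: "finite (neighbours V adj w)"
  using finite_vertices by (simp add: neighbours_def)

lemma finite_arcs: "finite (arcs V adj)"
  unfolding arcs_eq_Sigma using finite_vertices finite_neighbours by blast

lemma card_neighbours: "real (card (neighbours V adj w)) = deg w"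
  by (simp add: gdeg_def neighbours_def)

lemma sum_arcs: "(\<Sum>e\<in>arcs V adj. h e) = (\<Sum>w\<in>V. \<Sum>z\<in>neighbours V adj w. h (w, z))"
  unfolding arcs_eq_Sigma
  using sum.Sigma[OF finite_vertices, of "neighbours V adj" "\<lambda>w z. h (w, z)"] finite_neighbours
  by simp

lemma num_arcs_eq: "num_arcs = (\<Sum>w\<in>V. deg w)"
  using sum_arcs[of "\<lambda>_. 1 :: real"] card_neighbours by simp

lemma num_arcs_pos: "num_arcs > 0"
  using gdeg_pos root finite_vertices num_arcs_eq
  by (metis sum_pos2 of_nat_0_less_iff order_refl of_nat_0_le_iff)

definition green_weighted :: "nat \<Rightarrow> real" where
  "green_weighted w = (\<Sum>v\<in>V. deg v * G w v)"

text \<open>The Laplacian of \<open>vertex_solution _ j\<close> is \<open>deg w (\<delta>\<^sub>w\<^sub>j - \<pi>\<^sub>j)\<close> with the stationary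
  vertex weights \<open>\<pi>\<^sub>j = deg j / num_arcs\<close>. Evaluated at the head of the first and the tail
  of the second arc, and divided by the degree of the latter, it solves the Poisson equation of
  the arc walk (\<open>arc_solution_poisson\<close>).\<close>
definition vertex_solution :: "nat \<Rightarrow> nat \<Rightarrow> real" where
  "vertex_solution w j = deg j * G w j - deg j / num_arcs * green_weighted w"

lemma laplacian_green_weighted:
  assumes "w \<in> V"
  shows "graph_laplacian V adj green_weighted w = deg w - (if w = r then num_arcs else 0)"
proof -
  have "graph_laplacian V adj green_weighted w
      = (\<Sum>u\<in>V. deg u * graph_laplacian V adj (\<lambda>v. G v u) w)"
    unfolding green_weighted_def graph_laplacian_sum
    using graph_laplacian_linear[of V adj "deg _" _ 0 "\<lambda>_. 0"] by simp
  also have "\<dots> = (\<Sum>u\<in>V. deg u * ((if w = u then 1 else 0) - (if w = r then 1 else 0)))"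
    using assms by (intro sum.cong) (simp_all add: laplacian_green)
  also have "\<dots> = deg w - (if w = r then num_arcs else 0)"
    using assms finite_vertices
    by (cases "w = r") (simp_all add: right_diff_distrib sum_subtractf num_arcs_eq
        if_distrib[of "\<lambda>t. _ * t"] cong: if_cong)
  finally show ?thesis .
qed

lemma laplacian_vertex_solution:
  assumes "w \<in> V" and "j \<in> V"
  shows "graph_laplacian V adj (\<lambda>v. vertex_solution v j) w
    = deg w * ((if w = j then 1 else 0) - deg j / num_arcs)"
  unfolding vertex_solution_def graph_laplacian_linear
  using assms num_arcs_pos by (simp add: laplacian_green laplacian_green_weighted field_simps)

lemma neighbour_sum_vertex_solution:
  assumes "w \<in> V" and "j \<in> V"
  shows "(\<Sum>z\<in>neighbours V adj w. vertex_solution z j)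
    = deg w * (vertex_solution w j - (if w = j then 1 else 0) + deg j / num_arcs)"
  using laplacian_vertex_solution[OF assms] graph_laplacian_eq[OF finite_vertices]
  by (simp add: algebra_simps)

lemma sum_vertex_solution: "(\<Sum>t\<in>V. vertex_solution w t) = 0"
  using num_arcs_pos
  by (simp add: vertex_solution_def sum_subtractf green_weighted_def sum_divide_distrib[symmetric]
      sum_distrib_right[symmetric] num_arcs_eq[symmetric] mult.commute)

lemma arc_ends_in_vertices: "e \<in> arcs V adj \<Longrightarrow> fst e \<in> V \<and> snd e \<in> V"
  by (auto simp: arcs_def)

definition arc_step :: "nat \<times> nat \<Rightarrow> nat \<times> nat \<Rightarrow> real" where
  "arc_step e f = (if snd e = fst f then 1 / deg (snd e) else 0)"

definition arc_solution :: "nat \<times> nat \<Rightarrow> nat \<times> nat \<Rightarrow> real" where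
  "arc_solution e f = vertex_solution (snd e) (fst f) / deg (fst f)"

lemma sum_arc_step:
  assumes "e \<in> arcs V adj"
  shows "(\<Sum>f\<in>arcs V adj. arc_step e f) = 1"
proof -
  have "(\<Sum>f\<in>arcs V adj. arc_step e f) = (\<Sum>w\<in>V. if w = snd e then deg w * (1 / deg w) else 0)"
    unfolding sum_arcs arc_step_def by (intro sum.cong) (auto simp: card_neighbours)
  then show ?thesis
    using arc_ends_in_vertices[OF assms] gdeg_pos finite_vertices by simp
qed

lemma arc_solution_poisson:
  assumes e: "e \<in> arcs V adj" and f: "f \<in> arcs V adj"
  shows "arc_solution e f - arc_step e f - (\<Sum>g\<in>arcs V adj. arc_step e g * arc_solution g f)
    = - 1 / num_arcs"
proof -
  define h t where "h = snd e" and "t = fst f"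
  have h: "h \<in> V" and t: "t \<in> V" using arc_ends_in_vertices e f unfolding h_def t_def by auto
  have "(\<Sum>g\<in>arcs V adj. arc_step e g * arc_solution g f)
      = (\<Sum>w\<in>V. if w = h then (\<Sum>z\<in>neighbours V adj w. vertex_solution z t) / (deg h * deg t) else 0)"
    unfolding sum_arcs arc_step_def arc_solution_def h_def t_def
    by (intro sum.cong) (auto simp: sum_divide_distrib)
  also have "\<dots> = (vertex_solution h t - (if h = t then 1 else 0) + deg t / num_arcs) / deg t"
    using h t gdeg_pos[OF h] finite_vertices by (simp add: neighbour_sum_vertex_solution)
  finally have step_sum: "(\<Sum>g\<in>arcs V adj. arc_step e g * arc_solution g f)
      = (vertex_solution h t - (if h = t then 1 else 0) + deg t / num_arcs) / deg t" .
  have step: "arc_step e f = (if h = t then 1 else 0) / deg t"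
    unfolding arc_step_def h_def t_def by simp
  have solution: "arc_solution e f = vertex_solution h t / deg t"
    unfolding arc_solution_def h_def t_def ..
  show ?thesis
    unfolding step_sum step solution using gdeg_pos[OF t] num_arcs_pos by (simp add: field_simps)
qed

lemma trace_arc_solution:
  "(\<Sum>e\<in>arcs V adj. arc_solution e e) = (\<Sum>t\<in>V. vertex_solution t t) - real (card V) + 1"
proof -
  have "(\<Sum>e\<in>arcs V adj. arc_solution e e)
      = (\<Sum>w\<in>V. (\<Sum>z\<in>neighbours V adj w. vertex_solution z w) / deg w)"
    unfolding sum_arcs arc_solution_def by (simp add: sum_divide_distrib)
  also have "\<dots> = (\<Sum>w\<in>V. vertex_solution w w - 1 + deg w / num_arcs)"
    using gdeg_pos by (intro sum.cong) (simp_all add: neighbour_sum_vertex_solution)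
  also have "\<dots> = (\<Sum>t\<in>V. vertex_solution t t) - real (card V) + 1"
    using num_arcs_pos
    by (simp add: sum.distrib sum_subtractf sum_divide_distrib[symmetric] num_arcs_eq[symmetric])
  finally show ?thesis .
qed

lemma row_sum_arc_solution:
  assumes "e \<in> arcs V adj"
  shows "(\<Sum>f\<in>arcs V adj. arc_solution e f) = 0"
proof -
  have "(\<Sum>f\<in>arcs V adj. arc_solution e f) = (\<Sum>w\<in>V. deg w * (vertex_solution (snd e) w / deg w))"
    unfolding sum_arcs arc_solution_def by (simp add: card_neighbours)
  also have "\<dots> = (\<Sum>w\<in>V. vertex_solution (snd e) w)"
    using gdeg_pos by (intro sum.cong) simp_all
  finally show ?thesis by (simp add: sum_vertex_solution)
qed

definition arc_list :: "(nat \<times> nat) list" where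
  "arc_list = sorted_list_of_set (arcs V adj)"

lemma length_arc_list: "length arc_list = card (arcs V adj)"
  unfolding arc_list_def using finite_arcs by simp

lemma arc_list_nth: "i < card (arcs V adj) \<Longrightarrow> arc_list ! i \<in> arcs V adj"
  unfolding arc_list_def using finite_arcs
    by (metis length_arc_list arc_list_def nth_mem set_sorted_list_of_set)

lemma sum_arc_list: "(\<Sum>i<card (arcs V adj). F (arc_list ! i)) = (\<Sum>e\<in>arcs V adj. F e)"
proof -
  have "(\<Sum>i<card (arcs V adj). F (arc_list ! i)) = sum_list (map F arc_list)"
    by (simp add: sum_list_sum_nth atLeast0LessThan length_arc_list)
  then show ?thesis
    using finite_arcs by (simp add: arc_list_def sum_list_distinct_conv_sum_set)
qed

lemma arc_walk_matrix_eq: "arc_walk_matrix V adj = mat (card (arcs V adj)) (card (arcs V adj))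
    (\<lambda>(i,j). complex_of_real (arc_step (arc_list ! i) (arc_list ! j)))"
  unfolding arc_walk_matrix_def Let_def arc_list_def[symmetric] length_arc_list arc_step_def
  by (rule eq_matI) auto

definition arc_solution_matrix :: "complex mat" where
  "arc_solution_matrix = mat (card (arcs V adj)) (card (arcs V adj))
    (\<lambda>(i,j). (if i = j then 1 else 0)
      + complex_of_real (arc_solution (arc_list ! i) (arc_list ! j)))"

lemma row_sum_arc_walk_matrix:
  assumes "i < card (arcs V adj)"
  shows "(\<Sum>j<card (arcs V adj). arc_walk_matrix V adj $$ (i,j)) = 1"
  using assms sum_arc_step[OF arc_list_nth[OF assms], THEN arg_cong[where f = complex_of_real]]
    sum_arc_list[of "\<lambda>f. complex_of_real (arc_step (arc_list ! i) f)"]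
  unfolding arc_walk_matrix_eq by (simp add: of_real_sum)

lemma arc_solution_matrix_poisson:
  assumes i: "i < card (arcs V adj)" and j: "j < card (arcs V adj)"
  shows "arc_solution_matrix $$ (i,j)
      - (\<Sum>k<card (arcs V adj). arc_walk_matrix V adj $$ (i,k) * arc_solution_matrix $$ (k,j))
    = (if i = j then 1 else 0) - complex_of_real (1 / num_arcs)"
proof -
  have "(\<Sum>k<card (arcs V adj). arc_walk_matrix V adj $$ (i,k) * arc_solution_matrix $$ (k,j))
      = complex_of_real (arc_step (arc_list ! i) (arc_list ! j))
        + (\<Sum>k<card (arcs V adj). complex_of_real
            (arc_step (arc_list ! i) (arc_list ! k) * arc_solution (arc_list ! k) (arc_list ! j)))"
    using i j unfolding arc_walk_matrix_eq arc_solution_matrix_def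
    by (simp add: algebra_simps sum.distrib if_distrib[of "\<lambda>t. _ * t"] if_distrib[of "\<lambda>t. t * _"]
        cong: if_cong)
  then have "arc_solution_matrix $$ (i,j)
      - (\<Sum>k<card (arcs V adj). arc_walk_matrix V adj $$ (i,k) * arc_solution_matrix $$ (k,j))
    = (if i = j then 1 else 0) + complex_of_real (arc_solution (arc_list ! i) (arc_list ! j)
        - arc_step (arc_list ! i) (arc_list ! j)
        - (\<Sum>g\<in>arcs V adj. arc_step (arc_list ! i) g * arc_solution g (arc_list ! j)))"
    using i j sum_arc_list[of "\<lambda>g. complex_of_real (arc_step (arc_list ! i) g
        * arc_solution g (arc_list ! j))"]
    unfolding arc_solution_matrix_def by (simp add: of_real_sum)
  then show ?thesis
    unfolding arc_solution_poisson[OF arc_list_nth[OF i] arc_list_nth[OF j]] by simp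
qed

lemma trace_arc_solution_matrix:
  "trace_mat arc_solution_matrix
    = complex_of_real (num_arcs + (\<Sum>t\<in>V. vertex_solution t t) - real (card V) + 1)"
proof -
  have "trace_mat arc_solution_matrix
      = (\<Sum>i<card (arcs V adj). 1 + complex_of_real (arc_solution (arc_list ! i) (arc_list ! i)))"
    unfolding trace_mat_def arc_solution_matrix_def by simp
  also have "\<dots> = complex_of_real (num_arcs + (\<Sum>e\<in>arcs V adj. arc_solution e e))"
    using sum_arc_list[of "\<lambda>e. complex_of_real (arc_solution e e)"]
      by (simp add: sum.distrib of_real_sum)
  finally show ?thesis unfolding trace_arc_solution by (simp add: algebra_simps)
qed

lemma row_sum_arc_solution_matrix:
  assumes "i < card (arcs V adj)"
  shows "(\<Sum>j<card (arcs V adj). arc_solution_matrix $$ (i,j)) = 1"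
proof -
  have "(\<Sum>j<card (arcs V adj). arc_solution_matrix $$ (i,j))
      = (\<Sum>j<card (arcs V adj). if i = j then 1 else 0)
        + (\<Sum>j<card (arcs V adj). complex_of_real (arc_solution (arc_list ! i) (arc_list ! j)))"
    unfolding arc_solution_matrix_def using assms by (simp add: sum.distrib)
  then show ?thesis
    using assms row_sum_arc_solution[OF arc_list_nth[OF assms], THEN arg_cong[where f = complex_of_real]]
      sum_arc_list[of "\<lambda>f. complex_of_real (arc_solution (arc_list ! i) f)"]
    by (simp add: of_real_sum)
qed

theorem kemeny_edge_eq_vertex_solution:
  "kemeny_edge V adj = complex_of_real (num_arcs - real (card V) + (\<Sum>t\<in>V. vertex_solution t t))"
proof -
  let ?m = "card (arcs V adj)" and ?\<pi> = "\<lambda>_::nat. complex_of_real (1 / num_arcs)"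
  have carrier: "arc_walk_matrix V adj \<in> carrier_mat ?m ?m" "arc_solution_matrix \<in> carrier_mat ?m ?m"
    unfolding arc_walk_matrix_eq arc_solution_matrix_def by auto
  have "(\<Sum>j<?m. ?\<pi> j) = 1" using num_arcs_pos by simp
  then have "kemeny_edge V adj
      = trace_mat arc_solution_matrix - (\<Sum>i<?m. \<Sum>j<?m. ?\<pi> i * arc_solution_matrix $$ (i,j))"
    unfolding kemeny_edge_def
    using kemeny_eq_trace_of_solution[OF carrier row_sum_arc_walk_matrix] arc_solution_matrix_poisson
    by blast
  also have "(\<Sum>i<?m. \<Sum>j<?m. ?\<pi> i * arc_solution_matrix $$ (i,j))
      = (\<Sum>i<?m. ?\<pi> i * (\<Sum>j<?m. arc_solution_matrix $$ (i,j)))"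
    by (simp add: sum_distrib_left)
  also have "\<dots> = 1"
    using \<open>(\<Sum>j<?m. ?\<pi> j) = 1\<close> row_sum_arc_solution_matrix by simp
  finally show ?thesis unfolding trace_arc_solution_matrix by simp
qed

theorem kemeny_edge_eq_green:
  "kemeny_edge V adj = complex_of_real (num_arcs - real (card V) + (\<Sum>t\<in>V. deg t * G t t)
     - (\<Sum>t\<in>V. deg t * green_weighted t) / num_arcs)"
  unfolding kemeny_edge_eq_vertex_solution vertex_solution_def
  by (simp add: sum_subtractf sum_divide_distrib)

end

definition cycle_green :: "nat \<Rightarrow> nat \<Rightarrow> nat \<Rightarrow> real" where
  "cycle_green m p q = real (min p q) * (real m - real (max p q)) / real m"

lemma cycle_green_zero [simp]: "cycle_green m 0 q = 0" "cycle_green m p 0 = 0"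
  unfolding cycle_green_def by auto

lemma cycle_green_eq: "m > 0 \<Longrightarrow> cycle_green m p q = real (min p q) - real p * real q / real m"
  by (cases "p \<le> q") (auto simp: cycle_green_def min_def max_def field_simps)

lemma cycle_green_laplacian:
  assumes m: "m \<ge> 3" and w: "w < m" and q: "q < m"
  shows "2 * cycle_green m w q - cycle_green m (if Suc w = m then 0 else Suc w) q
      - cycle_green m (if w = 0 then m - 1 else w - 1) q = (if w = q then 1 else 0)
        - (if w = 0 then 1 else 0)"
proof -
  have m0: "m > 0" using m by simp
  consider "w = 0" | "0 < w" "Suc w = m" | "0 < w" "Suc w < m" using w by linarith
  then show ?thesis
  proof cases
    case 1
    then show ?thesis using m q
      by (auto simp: cycle_green_eq[OF m0] of_nat_diff field_simps min_def)
  next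
    case 2
    have succ: "(if Suc w = m then 0 else Suc w) = 0"
      and pred: "(if w = 0 then m - 1 else w - 1) = m - 2"
      and w_eq: "w = m - 1" using 2 by auto
    consider "q = m - 1" | "q = m - 2" | "q < m - 2" using q by linarith
    then show ?thesis unfolding succ pred w_eq using m
      by cases (auto simp: cycle_green_def min_def max_def of_nat_diff field_simps)
  next
    case 3
    consider "q < w - 1" | "q = w - 1" | "q = w" | "w < q" by linarith
    then show ?thesis using 3 q
      by cases (auto simp: cycle_green_eq[OF m0] of_nat_diff field_simps min_def)
  qed
qed

lemma path_green_laplacian:
  fixes t D K :: nat
  assumes "t \<le> K" "D \<le> K"
  shows "(if t < K then real (min t D) - real (min (Suc t) D) else 0)
       + (if 1 \<le> t then real (min t D) - real (min (t - 1) D) else 0)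
       = (if t = D then 1 else 0) - (if t = 0 then 1 else 0)"
  using assms by (auto simp: min_def of_nat_diff)

lemma sum_real_lessThan: "(\<Sum>x<m. real x) = real m * (real m - 1) / 2"
  by (induction m) (auto simp: field_simps)

lemma sum_real_squares_lessThan:
  "(\<Sum>x<m. real x * real x) = real m * (real m - 1) * (2 * real m - 1) / 6"
  by (induction m) (auto simp: field_simps)

lemma sum_min_lessThan:
  "(\<Sum>x<m. \<Sum>y<m. real (min x y)) = real m * (real m - 1) * (2 * real m - 1) / 6"
proof (induction m)
  case 0 then show ?case by simp
next
  case (Suc m)
  have inner: "(\<Sum>y<Suc m. real (min x y)) = (\<Sum>y<m. real (min x y)) + real x" if "x < m" for x
    using that by simp
  have "(\<Sum>x<Suc m. \<Sum>y<Suc m. real (min x y)) = (\<Sum>x<m. \<Sum>y<Suc m. real (min x y))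
    + (\<Sum>y<Suc m. real (min m y))"
    by simp
  also have "(\<Sum>x<m. \<Sum>y<Suc m. real (min x y)) = (\<Sum>x<m. \<Sum>y<m. real (min x y)) + (\<Sum>x<m. real x)"
    by (simp add: inner sum.distrib)
  also have "(\<Sum>y<Suc m. real (min m y)) = (\<Sum>y<m. real y) + real m"
    by (simp add: min_def)
  finally show ?case using Suc.IH by (simp add: sum_real_lessThan field_simps)
qed

lemma sum_min_Suc_lessThan:
  "(\<Sum>x<m. \<Sum>y<m. real (min (Suc x) (Suc y))) = real (Suc m) * real m * (2 * real m + 1) / 6"
proof -
  have "(\<Sum>x<Suc m. \<Sum>y<Suc m. real (min x y)) = (\<Sum>x<m. \<Sum>y<m. real (min (Suc x) (Suc y)))"
    by (simp only: sum.lessThan_Suc_shift) simp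
  thus ?thesis using sum_min_lessThan[of "Suc m"] by (simp add: field_simps)
qed

lemma sum_cycle_green_diag: "m > 0 \<Longrightarrow> (\<Sum>x<m. cycle_green m x x) = (real m * real m - 1) / 6"
proof -
  assume m: "m > 0"
  have "(\<Sum>x<m. cycle_green m x x) = (\<Sum>x<m. real x) - (\<Sum>x<m. real x * real x) / real m"
    using m by (simp add: cycle_green_eq sum_subtractf sum_divide_distrib)
  also have "\<dots> = (real m * real m - 1) / 6"
    unfolding sum_real_lessThan sum_real_squares_lessThan using m by (simp add: field_simps)
  finally show ?thesis .
qed

lemma sum_cycle_green:
  "m > 0 \<Longrightarrow> (\<Sum>x<m. \<Sum>y<m. cycle_green m x y) = real m * (real m * real m - 1) / 12"
proof -
  assume m: "m > 0"
  have "(\<Sum>x<m. \<Sum>y<m. cycle_green m x y)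
      = (\<Sum>x<m. \<Sum>y<m. real (min x y)) - (\<Sum>x<m. real x) * (\<Sum>y<m. real y) / real m"
    using m by (simp add: cycle_green_eq sum_subtractf sum_divide_distrib sum_product)
  also have "\<dots> = real m * (real m * real m - 1) / 12"
    unfolding sum_real_lessThan sum_min_lessThan using m by (simp add: field_simps)
  finally show ?thesis .
qed

lemma sum_cycle_degree_weighted:
  "(\<Sum>x<(m::nat). (2 + (if x = 0 then 1 else 0)) * g x)
    = 2 * (\<Sum>x<m. g x) + (if 0 < m then g 0 else (0::real))"
proof -
  have "(\<Sum>x<m. (2 + (if x = 0 then 1 else 0)) * g x) = (\<Sum>x<m. 2 * g x + (if x = 0 then g x else 0))"
    by (rule sum.cong) auto
  moreover have "(\<Sum>x<m. if x = 0 then g x else 0) = (if 0 < m then g 0 else 0)"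
    by (induction m) auto
  ultimately show ?thesis by (simp add: sum.distrib sum_distrib_left)
qed

lemma sum_lessThan_add_split: "(\<Sum>i<p+q. f i) = (\<Sum>i<p. f i) + (\<Sum>i<q. f (p+i::nat))"
  by (induction q) (auto simp: add_ac)

locale cycle_barbell =
  fixes a b k :: nat
  assumes a_ge_3: "a \<ge> 3" and b_ge_3: "b \<ge> 3" and k_ge_2: "k \<ge> 2"
begin

definition n :: nat where "n = a + b + k - 2"
definition c :: nat where "c = a + k - 2"
definition succ_a :: "nat \<Rightarrow> nat" where "succ_a i = (if Suc i = a then 0 else Suc i)"
definition pred_a :: "nat \<Rightarrow> nat" where "pred_a i = (if i = 0 then a - 1 else i - 1)"
definition succ_b :: "nat \<Rightarrow> nat" where "succ_b i = (if Suc i = b then 0 else Suc i)"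
definition pred_b :: "nat \<Rightarrow> nat" where "pred_b i = (if i = 0 then b - 1 else i - 1)"
abbreviation path_vertex :: "nat \<Rightarrow> nat" where "path_vertex \<equiv> cb_path_vertex a"
abbreviation adj :: "nat \<Rightarrow> nat \<Rightarrow> bool" where "adj \<equiv> cb_adj k a b"
definition cb_arcs :: "(nat \<times> nat) set" where "cb_arcs = arcs {..<n} adj"

definition A_fwd :: "(nat \<times> nat) set" where
  "A_fwd = (\<lambda>i. (i, succ_a i)) ` {..<a}"
definition A_bwd :: "(nat \<times> nat) set" where
  "A_bwd = (\<lambda>i. (succ_a i, i)) ` {..<a}"
definition P_fwd :: "(nat \<times> nat) set" where
  "P_fwd = (\<lambda>j. (path_vertex j, path_vertex (Suc j))) ` {..<k-1}"
definition P_bwd :: "(nat \<times> nat) set" where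
  "P_bwd = (\<lambda>j. (path_vertex (Suc j), path_vertex j)) ` {..<k-1}"
definition B_fwd :: "(nat \<times> nat) set" where
  "B_fwd = (\<lambda>i. (c + i, c + succ_b i)) ` {..<b}"
definition B_bwd :: "(nat \<times> nat) set" where
  "B_bwd = (\<lambda>i. (c + succ_b i, c + i)) ` {..<b}"

lemma Suc_mod_a: "i < a \<Longrightarrow> (i + 1) mod a = succ_a i"
  unfolding succ_a_def by (auto simp: mod_if)
lemma Suc_mod_b: "i < b \<Longrightarrow> (i + 1) mod b = succ_b i"
  unfolding succ_b_def by (auto simp: mod_if)

lemma cb_edge_dir_iff: "cb_edge_dir k a b u v \<longleftrightarrow> (u, v) \<in> A_fwd \<union> P_fwd \<union> B_fwd"
proof -
  have "(\<exists>i<a. u = i \<and> v = (i + 1) mod a) \<longleftrightarrow> (u,v) \<in> A_fwd"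
    unfolding A_fwd_def using Suc_mod_a by auto
  moreover have "(\<exists>j. j + 1 < k \<and> u = path_vertex j \<and> v = path_vertex (j + 1)) \<longleftrightarrow> (u,v) \<in> P_fwd"
    unfolding P_fwd_def by (auto simp: less_diff_conv)
  moreover have "(\<exists>i<b. u = a + k - 2 + i \<and> v = a + k - 2 + (i + 1) mod b) \<longleftrightarrow> (u,v) \<in> B_fwd"
    unfolding B_fwd_def c_def using Suc_mod_b by auto
  ultimately show ?thesis unfolding cb_edge_dir_def by blast
qed

lemma succ_a_less: "i < a \<Longrightarrow> succ_a i < a" unfolding succ_a_def using a_ge_3 by auto
lemma succ_b_less: "i < b \<Longrightarrow> succ_b i < b" unfolding succ_b_def using b_ge_3 by auto
lemma path_vertex_le_c: "j < k \<Longrightarrow> path_vertex j \<le> c" unfolding cb_path_vertex_def c_def by auto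
lemma c_less_n: "c < n" unfolding c_def n_def using b_ge_3 by auto
lemma path_vertex_less_n: "j < k \<Longrightarrow> path_vertex j < n" using path_vertex_le_c c_less_n
  by (meson le_less_trans)

lemma arc_families_subset: "A_fwd \<union> A_bwd \<union> P_fwd \<union> P_bwd \<union> B_fwd \<union> B_bwd \<subseteq> {..<n} \<times> {..<n}"
proof -
  have "a \<le> n" "c + b = n" unfolding n_def c_def using k_ge_2 by auto
  hence "A_fwd \<subseteq> {..<n} \<times> {..<n}" "A_bwd \<subseteq> {..<n} \<times> {..<n}"
     "P_fwd \<subseteq> {..<n} \<times> {..<n}" "P_bwd \<subseteq> {..<n} \<times> {..<n}"
     "B_fwd \<subseteq> {..<n} \<times> {..<n}" "B_bwd \<subseteq> {..<n} \<times> {..<n}"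
    unfolding A_fwd_def A_bwd_def P_fwd_def P_bwd_def B_fwd_def B_bwd_def
    using succ_a_less succ_b_less path_vertex_le_c c_less_n
      by (auto intro!: image_subsetI dest: succ_a_less succ_b_less simp: less_diff_conv path_vertex_less_n)
  thus ?thesis by blast
qed

lemma arcs_eq_families: "cb_arcs = A_fwd \<union> A_bwd \<union> P_fwd \<union> P_bwd \<union> B_fwd \<union> B_bwd"
proof -
  have sw: "\<And>u v. (v,u) \<in> A_fwd \<longleftrightarrow> (u,v) \<in> A_bwd" "\<And>u v. (v,u) \<in> P_fwd \<longleftrightarrow> (u,v) \<in> P_bwd"
     "\<And>u v. (v,u) \<in> B_fwd \<longleftrightarrow> (u,v) \<in> B_bwd"
    unfolding A_fwd_def A_bwd_def P_fwd_def P_bwd_def B_fwd_def B_bwd_def by auto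
  have "cb_arcs = {p. fst p < n \<and> snd p < n
    \<and> (p \<in> A_fwd \<union> P_fwd \<union> B_fwd \<or> (snd p, fst p) \<in> A_fwd \<union> P_fwd \<union> B_fwd)}"
    unfolding cb_arcs_def arcs_def cb_adj_def cb_edge_dir_iff by auto
  also have "\<dots> = {p. fst p < n \<and> snd p < n \<and> p \<in> A_fwd \<union> A_bwd \<union> P_fwd \<union> P_bwd \<union> B_fwd \<union> B_bwd}"
    using sw by auto
  also have "\<dots> = A_fwd \<union> A_bwd \<union> P_fwd \<union> P_bwd \<union> B_fwd \<union> B_bwd" using arc_families_subset by auto
  finally show ?thesis .
qed

lemma path_vertex_inj: "path_vertex x = path_vertex y \<Longrightarrow> x = y"
  unfolding cb_path_vertex_def using a_ge_3 by (auto split: if_splits)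

lemma a_le_c: "a \<le> c" unfolding c_def using k_ge_2 by auto

lemma A_arc_bounds: "p \<in> A_fwd \<union> A_bwd \<Longrightarrow> fst p < a \<and> snd p < a"
  unfolding A_fwd_def A_bwd_def using succ_a_less by auto
lemma B_arc_bounds: "p \<in> B_fwd \<union> B_bwd \<Longrightarrow> fst p \<ge> c \<and> snd p \<ge> c"
  unfolding B_fwd_def B_bwd_def by auto
lemma P_arc_bounds: "p \<in> P_fwd \<union> P_bwd \<Longrightarrow> max (fst p) (snd p) \<ge> a \<and> min (fst p) (snd p) < c"
  unfolding P_fwd_def P_bwd_def cb_path_vertex_def c_def using a_ge_3 by (auto simp: less_diff_conv)

lemma disjoint_A: "A_fwd \<inter> A_bwd = {}"
  unfolding A_fwd_def A_bwd_def succ_a_def using a_ge_3 by (auto split: if_splits)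
lemma disjoint_B: "B_fwd \<inter> B_bwd = {}"
  unfolding B_fwd_def B_bwd_def succ_b_def using b_ge_3 by (auto split: if_splits)
lemma disjoint_P: "P_fwd \<inter> P_bwd = {}"
proof -
  { fix x y assume "path_vertex x = path_vertex (Suc y)" "path_vertex (Suc x) = path_vertex y"
    hence "x = Suc y" "Suc x = y" using path_vertex_inj by blast+
    hence False by simp }
  thus ?thesis unfolding P_fwd_def P_bwd_def by auto
qed

lemma disjoint_A_P: "(A_fwd \<union> A_bwd) \<inter> (P_fwd \<union> P_bwd) = {}"
proof -
  { fix p assume "p \<in> A_fwd \<union> A_bwd" "p \<in> P_fwd \<union> P_bwd"
    from A_arc_bounds[OF this(1)] P_arc_bounds[OF this(2)] have False
      by (simp add: max_def split: if_splits) }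
  thus ?thesis by blast
qed
lemma disjoint_A_B: "(A_fwd \<union> A_bwd) \<inter> (B_fwd \<union> B_bwd) = {}"
proof -
  { fix p assume "p \<in> A_fwd \<union> A_bwd" "p \<in> B_fwd \<union> B_bwd"
    from A_arc_bounds[OF this(1)] B_arc_bounds[OF this(2)] a_le_c have False by simp }
  thus ?thesis by blast
qed
lemma disjoint_P_B: "(P_fwd \<union> P_bwd) \<inter> (B_fwd \<union> B_bwd) = {}"
proof -
  { fix p assume "p \<in> P_fwd \<union> P_bwd" "p \<in> B_fwd \<union> B_bwd"
    from P_arc_bounds[OF this(1)] B_arc_bounds[OF this(2)] have False
      by (simp add: min_def split: if_splits) }
  thus ?thesis by blast
qed

lemma finite_families:
  "finite A_fwd" "finite A_bwd" "finite P_fwd" "finite P_bwd" "finite B_fwd" "finite B_bwd"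
  unfolding A_fwd_def A_bwd_def P_fwd_def P_bwd_def B_fwd_def B_bwd_def by auto

lemma sum_arcs_families:
  fixes F :: "nat \<times> nat \<Rightarrow> 'x::comm_monoid_add"
  shows "sum F cb_arcs = (\<Sum>i<a. F (i, succ_a i)) + (\<Sum>i<a. F (succ_a i, i))
     + (\<Sum>j<k-1. F (path_vertex j, path_vertex (Suc j)))
       + (\<Sum>j<k-1. F (path_vertex (Suc j), path_vertex j))
     + (\<Sum>i<b. F (c+i, c+succ_b i)) + (\<Sum>i<b. F (c + succ_b i, c + i))"
proof -
  have "sum F cb_arcs = sum F (A_fwd \<union> A_bwd) + sum F (P_fwd \<union> P_bwd) + sum F (B_fwd \<union> B_bwd)"
  proof -
    have "cb_arcs = ((A_fwd \<union> A_bwd) \<union> (P_fwd \<union> P_bwd)) \<union> (B_fwd \<union> B_bwd)"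
      unfolding arcs_eq_families by auto
    moreover have "sum F (((A_fwd \<union> A_bwd) \<union> (P_fwd \<union> P_bwd)) \<union> (B_fwd \<union> B_bwd))
      = sum F ((A_fwd \<union> A_bwd) \<union> (P_fwd \<union> P_bwd)) + sum F (B_fwd \<union> B_bwd)"
      by (rule sum.union_disjoint) (use finite_families disjoint_A_B disjoint_P_B in auto)
    moreover have "sum F ((A_fwd \<union> A_bwd) \<union> (P_fwd \<union> P_bwd)) = sum F (A_fwd \<union> A_bwd)
      + sum F (P_fwd \<union> P_bwd)"
      by (rule sum.union_disjoint) (use finite_families disjoint_A_P in auto)
    ultimately show ?thesis by simp
  qed
  moreover have "sum F (A_fwd \<union> A_bwd) = sum F A_fwd + sum F A_bwd"
    by (rule sum.union_disjoint) (use finite_families disjoint_A in auto)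
  moreover have "sum F (P_fwd \<union> P_bwd) = sum F P_fwd + sum F P_bwd"
    by (rule sum.union_disjoint) (use finite_families disjoint_P in auto)
  moreover have "sum F (B_fwd \<union> B_bwd) = sum F B_fwd + sum F B_bwd"
    by (rule sum.union_disjoint) (use finite_families disjoint_B in auto)
  moreover have "sum F A_fwd = (\<Sum>i<a. F (i, succ_a i))"
    unfolding A_fwd_def by (subst sum.reindex) (auto simp: inj_on_def)
  moreover have "sum F A_bwd = (\<Sum>i<a. F (succ_a i, i))"
    unfolding A_bwd_def by (subst sum.reindex) (auto simp: inj_on_def)
  moreover have "sum F P_fwd = (\<Sum>j<k-1. F (path_vertex j, path_vertex (Suc j)))"
    unfolding P_fwd_def by (subst sum.reindex) (auto simp: inj_on_def dest: path_vertex_inj)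
  moreover have "sum F P_bwd = (\<Sum>j<k-1. F (path_vertex (Suc j), path_vertex j))"
    unfolding P_bwd_def by (subst sum.reindex) (auto simp: inj_on_def dest: path_vertex_inj)
  moreover have "sum F B_fwd = (\<Sum>i<b. F (c+i, c+succ_b i))"
    unfolding B_fwd_def by (subst sum.reindex) (auto simp: inj_on_def)
  moreover have "sum F B_bwd = (\<Sum>i<b. F (c + succ_b i, c + i))"
    unfolding B_bwd_def by (subst sum.reindex) (auto simp: inj_on_def)
  ultimately show ?thesis by (simp add: add.assoc)
qed

definition path_index :: "nat \<Rightarrow> nat" where "path_index w = (if w = 0 then 0 else w + 1 - a)"

lemma c_plus_b: "c + b = n" unfolding c_def n_def using k_ge_2 by auto

lemma sum_A_fwd_at: "(\<Sum>i<a. if i = w then h (i, succ_a i) else 0)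
  = (if w < a then h (w, succ_a w) else (0::'x::comm_monoid_add))"
  by (simp add: sum.delta')
lemma sum_A_bwd_at: "(\<Sum>i<a. if succ_a i = w then h (succ_a i, i) else 0)
  = (if w < a then h (w, pred_a w) else (0::'x::comm_monoid_add))"
proof -
  have "(\<Sum>i<a. if succ_a i = w then h (succ_a i, i) else 0)
    = (\<Sum>i<a. if i = pred_a w \<and> w < a then h (w, pred_a w) else 0)"
    by (rule sum.cong) (use a_ge_3 in \<open>auto simp: succ_a_def pred_a_def split: if_splits\<close>)
  also have "\<dots> = (if w < a then h (w, pred_a w) else 0)"
    using a_ge_3 by (auto simp: sum.delta' pred_a_def)
  finally show ?thesis .
qed
lemma sum_B_fwd_at: "(\<Sum>i<b. if c + i = w then h (c + i, c + succ_b i) else 0)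
  = (if c \<le> w \<and> w < n then h (w, c + succ_b (w - c)) else (0::'x::comm_monoid_add))"
proof -
  have "(\<Sum>i<b. if c + i = w then h (c + i, c + succ_b i) else 0)
    = (\<Sum>i<b. if i = w - c \<and> c \<le> w then h (w, c + succ_b (w - c)) else 0)"
    by (rule sum.cong) auto
  also have "\<dots> = (if c \<le> w \<and> w < n then h (w, c + succ_b (w - c)) else 0)"
    using c_plus_b by (auto simp: sum.delta')
  finally show ?thesis .
qed
lemma sum_B_bwd_at: "(\<Sum>i<b. if c + succ_b i = w then h (c + succ_b i, c + i) else 0)
  = (if c \<le> w \<and> w < n then h (w, c + pred_b (w - c)) else (0::'x::comm_monoid_add))"
proof -
  have "(\<Sum>i<b. if c + succ_b i = w then h (c + succ_b i, c + i) else 0)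
    = (\<Sum>i<b. if i = pred_b (w - c) \<and> c \<le> w \<and> w < n then h (w, c + pred_b (w - c)) else 0)"
    by (rule sum.cong) (use b_ge_3 c_plus_b in \<open>auto simp: succ_b_def pred_b_def split: if_splits\<close>)
  also have "\<dots> = (if c \<le> w \<and> w < n then h (w, c + pred_b (w - c)) else 0)"
    using b_ge_3 c_plus_b by (auto simp: sum.delta' pred_b_def)
  finally show ?thesis .
qed
lemma sum_P_fwd_at:
  "(\<Sum>j<k-1. if path_vertex j = w then h (path_vertex j, path_vertex (Suc j)) else 0)
    = (if w = 0 \<or> (a \<le> w \<and> w < c) then h (w, path_vertex (Suc (path_index w)))
       else (0::'x::comm_monoid_add))"
proof -
  have "(\<Sum>j<k-1. if path_vertex j = w then h (path_vertex j, path_vertex (Suc j)) else 0)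
    = (\<Sum>j<k-1. if j = path_index w \<and> (w = 0 \<or> (a \<le> w \<and> w < c))
        then h (w, path_vertex (Suc (path_index w))) else 0)"
    by (rule sum.cong) (use a_ge_3 in \<open>auto simp: cb_path_vertex_def path_index_def c_def split: if_splits\<close>)
  also have "\<dots> = (if w = 0 \<or> (a \<le> w \<and> w < c) then h (w, path_vertex (Suc (path_index w))) else 0)"
    using k_ge_2 by (auto simp: sum.delta' path_index_def c_def)
  finally show ?thesis .
qed
lemma sum_P_bwd_at:
  "(\<Sum>j<k-1. if path_vertex (Suc j) = w then h (path_vertex (Suc j), path_vertex j) else 0)
    = (if a \<le> w \<and> w \<le> c then h (w, path_vertex (w - a)) else (0::'x::comm_monoid_add))"
proof -
  have "(\<Sum>j<k-1. if path_vertex (Suc j) = w then h (path_vertex (Suc j), path_vertex j) else 0)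
    = (\<Sum>j<k-1. if j = w - a \<and> a \<le> w \<and> w \<le> c then h (w, path_vertex (w - a)) else 0)"
    by (rule sum.cong) (use a_ge_3 in \<open>auto simp: cb_path_vertex_def c_def split: if_splits\<close>)
  also have "\<dots> = (if a \<le> w \<and> w \<le> c then h (w, path_vertex (w - a)) else 0)"
    using k_ge_2 by (auto simp: sum.delta' c_def)
  finally show ?thesis .
qed

lemma sum_out_arcs:
  "(\<Sum>e\<in>cb_arcs. if fst e = w then h e else (0::'x::comm_monoid_add)) =
     (if w < a then h (w, succ_a w) + h (w, pred_a w) else 0)
   + (if w = 0 \<or> (a \<le> w \<and> w < c) then h (w, path_vertex (Suc (path_index w))) else 0)
   + (if a \<le> w \<and> w \<le> c then h (w, path_vertex (w - a)) else 0)
   + (if c \<le> w \<and> w < n then h (w, c + succ_b (w - c)) + h (w, c + pred_b (w - c)) else 0)"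
  unfolding sum_arcs_families[of "\<lambda>e. if fst e = w then h e else 0"] fst_conv
    sum_A_fwd_at sum_A_bwd_at sum_B_fwd_at sum_B_bwd_at sum_P_fwd_at sum_P_bwd_at
  by (simp add: ac_simps)

lemma sum_neighbours:
  assumes "w < n"
  shows "(\<Sum>z\<in>neighbours {..<n} adj w. h z) =
     (if w < a then h (succ_a w) + h (pred_a w) else 0)
   + (if w = 0 \<or> (a \<le> w \<and> w < c) then h (path_vertex (Suc (path_index w))) else 0)
   + (if a \<le> w \<and> w \<le> c then h (path_vertex (w - a)) else 0)
   + (if c \<le> w \<and> w < n then h (c + succ_b (w - c)) + h (c + pred_b (w - c)) else 0)"
proof -
  have "(\<Sum>z\<in>neighbours {..<n} adj w. h z) = (\<Sum>e\<in>cb_arcs. if fst e = w then h (snd e) else 0)"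
    unfolding cb_arcs_def using assms by (intro sum_neighbours_eq_sum_arcs) auto
  also have "\<dots> = (if w < a then h (succ_a w) + h (pred_a w) else 0)
   + (if w = 0 \<or> (a \<le> w \<and> w < c) then h (path_vertex (Suc (path_index w))) else 0)
   + (if a \<le> w \<and> w \<le> c then h (path_vertex (w - a)) else 0)
   + (if c \<le> w \<and> w < n then h (c + succ_b (w - c)) + h (c + pred_b (w - c)) else 0)"
    unfolding sum_out_arcs by (simp only: snd_conv)
  finally show ?thesis .
qed

definition barbell_deg :: "nat \<Rightarrow> nat" where
  "barbell_deg w = (if w = 0 \<or> w = c then 3 else 2)"

lemma gdeg_barbell:
  assumes "w < n"
  shows "gdeg {..<n} adj w = barbell_deg w"
proof -
  have "gdeg {..<n} adj w = (\<Sum>z\<in>neighbours {..<n} adj w. 1)"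
    by (simp add: gdeg_def neighbours_def)
  then show ?thesis
    unfolding sum_neighbours[OF assms] using assms a_ge_3 k_ge_2 a_le_c
    by (auto simp: barbell_deg_def c_def)
qed

definition pos_a :: "nat \<Rightarrow> nat" where
  "pos_a v = (if v < a then v else 0)"

definition path_pos :: "nat \<Rightarrow> nat" where
  "path_pos v = (if v < a then 0 else if v \<le> c then v + 1 - a else k - 1)"

definition pos_b :: "nat \<Rightarrow> nat" where
  "pos_b v = (if c \<le> v then v - c else 0)"

text \<open>The grounded Green's functions of \<open>C\<^sub>a\<close>, of the path and of \<open>C\<^sub>b\<close>, glued at the
  cut vertices \<open>0\<close> and \<open>c\<close>; \<open>pos_a\<close>, \<open>path_pos\<close> and \<open>pos_b\<close> are the projections of a
  vertex to the three blocks.\<close>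
definition green :: "nat \<Rightarrow> nat \<Rightarrow> real" where
  "green v w = cycle_green a (pos_a v) (pos_a w) + real (min (path_pos v) (path_pos w))
    + cycle_green b (pos_b v) (pos_b w)"

lemma path_pos_le: "path_pos q \<le> k - 1"
  unfolding path_pos_def c_def using k_ge_2 by auto

lemma pos_a_less: "pos_a q < a"
  unfolding pos_a_def using a_ge_3 by auto

lemma pos_b_less: "q < n \<Longrightarrow> pos_b q < b"
  unfolding pos_b_def using c_plus_b b_ge_3 by auto

lemma green_cycle_a: "x < a \<Longrightarrow> green x q = cycle_green a x (pos_a q)"
  unfolding green_def pos_a_def path_pos_def pos_b_def using a_le_c by auto

lemma green_path: "t < k \<Longrightarrow> green (path_vertex t) q = real (min t (path_pos q))"
  unfolding green_def pos_a_def path_pos_def pos_b_def cb_path_vertex_def c_def using a_ge_3 by auto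

lemma green_cycle_b: "s < b \<Longrightarrow> green (c + s) q = real (path_pos q) + cycle_green b s (pos_b q)"
proof -
  assume "s < b"
  have "path_pos (c + s) = k - 1" "pos_a (c + s) = 0" "pos_b (c + s) = s"
    using a_le_c a_ge_3 k_ge_2 unfolding path_pos_def pos_a_def pos_b_def c_def by auto
  then show ?thesis unfolding green_def using path_pos_le[of q] by (simp add: min_def)
qed

lemma laplacian_green_cycle_a:
  assumes "w < a"
  shows "(green w q - green (succ_a w) q) + (green w q - green (pred_a w) q)
    = (if w = pos_a q then 1 else 0) - (if w = 0 then 1 else 0)"
proof -
  have "succ_a w < a" "pred_a w < a" using assms succ_a_less a_ge_3 by (auto simp: pred_a_def)
  then have "(green w q - green (succ_a w) q) + (green w q - green (pred_a w) q)
      = 2 * cycle_green a w (pos_a q) - cycle_green a (succ_a w) (pos_a q)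
        - cycle_green a (pred_a w) (pos_a q)"
    using assms by (simp add: green_cycle_a)
  also have "\<dots> = (if w = pos_a q then 1 else 0) - (if w = 0 then 1 else 0)"
    using cycle_green_laplacian[OF a_ge_3 assms pos_a_less] unfolding succ_a_def pred_a_def .
  finally show ?thesis .
qed

lemma laplacian_green_cycle_b:
  assumes "s < b" and "q < n"
  shows "(green (c + s) q - green (c + succ_b s) q) + (green (c + s) q - green (c + pred_b s) q)
    = (if s = pos_b q then 1 else 0) - (if s = 0 then 1 else 0)"
proof -
  have "succ_b s < b" "pred_b s < b" using assms succ_b_less b_ge_3 by (auto simp: pred_b_def)
  then have "(green (c + s) q - green (c + succ_b s) q) + (green (c + s) q - green (c + pred_b s) q)
      = 2 * cycle_green b s (pos_b q) - cycle_green b (succ_b s) (pos_b q)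
        - cycle_green b (pred_b s) (pos_b q)"
    using assms by (simp add: green_cycle_b)
  also have "\<dots> = (if s = pos_b q then 1 else 0) - (if s = 0 then 1 else 0)"
    using cycle_green_laplacian[OF b_ge_3 assms(1) pos_b_less[OF assms(2)]]
      unfolding succ_b_def pred_b_def .
  finally show ?thesis .
qed

lemma laplacian_green_path:
  assumes "w = 0 \<or> (a \<le> w \<and> w \<le> c)"
  shows "(if w = 0 \<or> (a \<le> w \<and> w < c) then green w q
    - green (path_vertex (Suc (path_index w))) q else 0)
       + (if a \<le> w \<and> w \<le> c then green w q - green (path_vertex (w - a)) q else 0)
    = (if path_index w = path_pos q then 1 else 0) - (if path_index w = 0 then 1 else 0)"
proof -
  define t where "t = path_index w"
  have w_eq: "w = path_vertex t" and t: "t \<le> k - 1"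
    using assms a_ge_3 k_ge_2 unfolding t_def path_index_def cb_path_vertex_def c_def by auto
  have fwd: "(w = 0 \<or> (a \<le> w \<and> w < c)) \<longleftrightarrow> t < k - 1"
    and bwd: "(a \<le> w \<and> w \<le> c) \<longleftrightarrow> 1 \<le> t"
    using assms a_ge_3 k_ge_2 unfolding t_def path_index_def c_def by auto
  have "a \<le> w \<and> w \<le> c \<Longrightarrow> w - a = t - 1" unfolding t_def path_index_def by auto
  then have green_bwd: "green (path_vertex (w - a)) q = real (min (t - 1) (path_pos q))"
    if "a \<le> w \<and> w \<le> c" using that t k_ge_2 green_path[of "t - 1" q] by simp
  have green_fwd: "green (path_vertex (Suc t)) q = real (min (Suc t) (path_pos q))" if "t < k - 1"
    using that green_path[of "Suc t" q] by simp
  have "green w q = real (min t (path_pos q))"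
    using w_eq t k_ge_2 green_path[of t q] by simp
  then have "(if w = 0 \<or> (a \<le> w \<and> w < c) then green w q - green (path_vertex (Suc t)) q else 0)
       + (if a \<le> w \<and> w \<le> c then green w q - green (path_vertex (w - a)) q else 0)
    = (if t < k - 1 then real (min t (path_pos q)) - real (min (Suc t) (path_pos q)) else 0)
       + (if 1 \<le> t then real (min t (path_pos q)) - real (min (t - 1) (path_pos q)) else 0)"
    unfolding fwd bwd using green_fwd green_bwd bwd by simp
  also have "\<dots> = (if t = path_pos q then 1 else 0) - (if t = 0 then 1 else 0)"
    by (rule path_green_laplacian[OF t path_pos_le])
  finally show ?thesis unfolding t_def .
qed

lemma graph_laplacian_barbell:
  assumes "w < n"
  shows "graph_laplacian {..<n} adj f w =
     (if w < a then (f w - f (succ_a w)) + (f w - f (pred_a w)) else 0)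
   + ((if w = 0 \<or> (a \<le> w \<and> w < c) then f w - f (path_vertex (Suc (path_index w))) else 0)
      + (if a \<le> w \<and> w \<le> c then f w - f (path_vertex (w - a)) else 0))
   + (if c \<le> w \<and> w < n then (f w - f (c + succ_b (w - c))) + (f w - f (c + pred_b (w - c))) else 0)"
  unfolding graph_laplacian_def sum_neighbours[OF assms] by (simp only: add.assoc)

text \<open>At the cut vertices \<open>0\<close> and \<open>c\<close> the grounding term of one block cancels the
  indicator contributed by the adjacent block.\<close>
lemma block_indicators_sum:
  assumes w: "w < n" and q: "q < n"
  shows "(if w < a then (if w = pos_a q then 1 else 0) - (if w = 0 then 1 else 0) else 0)
     + (if w = 0 \<or> (a \<le> w \<and> w \<le> c)
        then (if path_index w = path_pos q then 1 else 0)
          - (if path_index w = 0 then 1 else 0) else 0)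
     + (if c \<le> w \<and> w < n then (if w - c = pos_b q then 1 else 0) - (if w = c then 1 else 0) else 0)
     = (if w = q then 1 else 0) - (if w = 0 then 1 else (0::real))"
proof -
  consider "w = 0" | "0 < w" "w < a" | "a \<le> w" "w < c" | "w = c" | "c < w"
    using w a_le_c by linarith
  then show ?thesis
  proof cases
    case 1
    then show ?thesis using a_ge_3 k_ge_2 a_le_c
      by (auto simp: pos_a_def path_index_def path_pos_def c_def)
  next
    case 2
    then show ?thesis using a_le_c by (auto simp: pos_a_def)
  next
    case 3
    then show ?thesis using a_ge_3 k_ge_2 q
      by (auto simp: path_index_def path_pos_def c_def)
  next
    case 4
    then show ?thesis using a_ge_3 k_ge_2 a_le_c q c_less_n
      by (auto simp: path_index_def path_pos_def pos_b_def c_def)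
  next
    case 5
    then show ?thesis using a_ge_3 a_le_c w by (auto simp: pos_b_def)
  qed
qed

lemma laplacian_green:
  assumes w: "w < n" and q: "q < n"
  shows "graph_laplacian {..<n} adj (\<lambda>v. green v q) w = (if w = q then 1 else 0)
    - (if w = 0 then 1 else 0)"
proof -
  have cycle_a: "(if w < a then (green w q - green (succ_a w) q)
    + (green w q - green (pred_a w) q) else 0)
      = (if w < a then (if w = pos_a q then 1 else 0) - (if w = 0 then 1 else 0) else 0)"
    using laplacian_green_cycle_a by simp
  have path: "(if w = 0 \<or> (a \<le> w \<and> w < c) then green w q
    - green (path_vertex (Suc (path_index w))) q else 0)
       + (if a \<le> w \<and> w \<le> c then green w q - green (path_vertex (w - a)) q else 0)
    = (if w = 0 \<or> (a \<le> w \<and> w \<le> c)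
       then (if path_index w = path_pos q then 1 else 0)
         - (if path_index w = 0 then 1 else 0) else 0)"
    using laplacian_green_path[of w q] by auto
  have cycle_b: "(if c \<le> w \<and> w < n
        then (green w q - green (c + succ_b (w - c)) q)
          + (green w q - green (c + pred_b (w - c)) q) else 0)
      = (if c \<le> w \<and> w < n then (if w - c = pos_b q then 1 else 0)
        - (if w = c then 1 else 0) else 0)"
  proof (cases "c \<le> w")
    case True
    define s where "s = w - c"
    have w_eq: "w = c + s" and s: "s < b" using True w c_plus_b unfolding s_def by auto
    show ?thesis unfolding w_eq using laplacian_green_cycle_b[OF s q] s c_plus_b by auto
  qed simp
  show ?thesis
    unfolding graph_laplacian_barbell[OF w] cycle_a path cycle_b
      by (rule block_indicators_sum[OF w q])
qed

sublocale grounded_green_function "{..<n}" adj green 0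
proof
  show "0 \<in> {..<n}" using c_less_n by simp
  show "gdeg {..<n} adj w > 0" if "w \<in> {..<n}" for w
    using that by (simp add: gdeg_barbell barbell_deg_def)
qed (simp_all add: laplacian_green)

lemma sum_vertices_split: "(\<Sum>v<n. f v) = (\<Sum>x<a. f x) + (\<Sum>t<k-2. f (a+t)) + (\<Sum>s<b. f (c+s))"
proof -
  have "n = (a + (k-2)) + b" unfolding n_def using k_ge_2 by simp
  hence "(\<Sum>v<n. f v) = (\<Sum>v<a + (k-2). f v) + (\<Sum>s<b. f (a + (k-2) + s))"
    by (simp only: sum_lessThan_add_split)
  also have "(\<Sum>v<a + (k-2). f v) = (\<Sum>x<a. f x) + (\<Sum>t<k-2. f (a+t))"
    by (rule sum_lessThan_add_split)
  finally show ?thesis unfolding c_def using k_ge_2 by simp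
qed

lemma green_A_A: "x < a \<Longrightarrow> y < a \<Longrightarrow> green x y = cycle_green a x y"
  using green_cycle_a[of x y] unfolding pos_a_def by simp
lemma green_A_P: "x < a \<Longrightarrow> t < k-2 \<Longrightarrow> green x (a+t) = 0 \<and> green (a+t) x = 0"
  unfolding green_def pos_a_def path_pos_def pos_b_def c_def by auto
lemma green_A_B: "x < a \<Longrightarrow> s < b \<Longrightarrow> green x (c+s) = 0 \<and> green (c+s) x = 0"
  using a_le_c unfolding green_def pos_a_def path_pos_def pos_b_def by auto
lemma green_P_P: "t < k-2 \<Longrightarrow> t' < k-2 \<Longrightarrow> green (a+t) (a+t') = real (min (Suc t) (Suc t'))"
  unfolding green_def pos_a_def path_pos_def pos_b_def c_def by auto
lemma green_P_B: "t < k-2 \<Longrightarrow> s < b \<Longrightarrow>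
    green (a+t) (c+s) = real (Suc t) \<and> green (c+s) (a+t) = real (Suc t)"
  using a_le_c unfolding green_def pos_a_def path_pos_def pos_b_def c_def by (auto simp: min_def)
lemma green_B_B: "s < b \<Longrightarrow> s' < b \<Longrightarrow> green (c+s) (c+s') = real (k-1) + cycle_green b s s'"
proof -
  assume s: "s < b" and s': "s' < b"
  have "path_pos (c + s') = k - 1" using a_le_c a_ge_3 k_ge_2 unfolding path_pos_def c_def by auto
  moreover have "pos_b (c + s') = s'" unfolding pos_b_def by auto
  ultimately show ?thesis using green_cycle_b[OF s, of "c+s'"] by simp
qed

lemma deg_cycle_a: "x < a \<Longrightarrow> deg x = 2 + (if x = 0 then 1 else 0)"
  using a_le_c c_less_n by (simp add: gdeg_barbell barbell_deg_def)

lemma deg_path: "t < k - 2 \<Longrightarrow> deg (a + t) = 2"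
  using a_ge_3 c_less_n by (simp add: gdeg_barbell barbell_deg_def c_def)

lemma deg_cycle_b: "s < b \<Longrightarrow> deg (c + s) = 2 + (if s = 0 then 1 else 0)"
  using a_ge_3 a_le_c c_plus_b by (simp add: gdeg_barbell barbell_deg_def)

lemma sum_path_Suc: "(\<Sum>t<k-2. real (Suc t)) = (real k - 2) * (real k - 1) / 2"
  using k_ge_2 by (simp add: sum.distrib sum_real_lessThan of_nat_diff field_simps)

lemma sum_deg_green_diag:
  "(\<Sum>v<n. deg v * green v v) = (real a * real a - 1) / 3 + (real k - 2) * (real k - 1)
    + (2 * real b + 1) * (real k - 1) + (real b * real b - 1) / 3"
proof -
  have A: "(\<Sum>x<a. deg x * green x x) = (real a * real a - 1) / 3"
  proof -
    have "(\<Sum>x<a. deg x * green x x) = (\<Sum>x<a. (2 + (if x = 0 then 1 else 0)) * cycle_green a x x)"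
      by (rule sum.cong) (auto simp: deg_cycle_a green_A_A)
    also have "\<dots> = (real a * real a - 1) / 3" unfolding sum_cycle_degree_weighted using a_ge_3
      by (simp add: sum_cycle_green_diag)
    finally show ?thesis .
  qed
  have "(\<Sum>t<k-2. deg (a+t) * green (a+t) (a+t)) = 2 * (\<Sum>t<k-2. real (Suc t))"
    unfolding sum_distrib_left by (rule sum.cong) (auto simp: deg_path green_P_P)
  then have P: "(\<Sum>t<k-2. deg (a+t) * green (a+t) (a+t)) = (real k - 2) * (real k - 1)"
    unfolding sum_path_Suc by simp
  have B: "(\<Sum>s<b. deg (c+s) * green (c+s) (c+s)) = (2 * real b + 1) * (real k - 1)
    + (real b * real b - 1) / 3"
  proof -
    have "(\<Sum>s<b. deg (c+s) * green (c+s) (c+s))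
      = (\<Sum>s<b. (2 + (if s = 0 then 1 else 0)) * (real (k-1) + cycle_green b s s))"
      by (rule sum.cong) (auto simp: deg_cycle_b green_B_B)
    also have "\<dots> = 2 * (real b * real (k-1) + (real b * real b - 1) / 6) + real (k-1)"
      unfolding sum_cycle_degree_weighted using b_ge_3
        by (simp add: sum.distrib sum_cycle_green_diag)
    also have "\<dots> = (2 * real b + 1) * (real k - 1) + (real b * real b - 1) / 3"
      using k_ge_2 by (simp add: of_nat_diff field_simps)
    finally show ?thesis .
  qed
  show ?thesis unfolding sum_vertices_split[of "\<lambda>v. deg v * green v v"] A P B by simp
qed

lemma green_weighted_cycle_a: "x < a \<Longrightarrow> green_weighted x = 2 * (\<Sum>y<a. cycle_green a x y)"
proof -
  assume x: "x < a"
  have "green_weighted x = (\<Sum>y<a. deg y * green x y) + (\<Sum>t<k-2. deg (a+t) * green x (a+t))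
    + (\<Sum>s<b. deg (c+s) * green x (c+s))"
    unfolding green_weighted_def by (rule sum_vertices_split)
  also have "(\<Sum>t<k-2. deg (a+t) * green x (a+t)) = 0" using green_A_P[OF x] by simp
  also have "(\<Sum>s<b. deg (c+s) * green x (c+s)) = 0" using green_A_B[OF x] by simp
  also have "(\<Sum>y<a. deg y * green x y) = (\<Sum>y<a. (2 + (if y = 0 then 1 else 0)) * cycle_green a x y)"
    by (rule sum.cong) (auto simp: deg_cycle_a green_A_A x)
  also have "\<dots> = 2 * (\<Sum>y<a. cycle_green a x y)" unfolding sum_cycle_degree_weighted by simp
  finally show ?thesis by simp
qed

lemma green_weighted_path: "t < k-2 \<Longrightarrow>
    green_weighted (a+t) = 2 * (\<Sum>t'<k-2. real (min (Suc t) (Suc t'))) + (2 * real b + 1) * real (Suc t)"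
proof -
  assume t: "t < k-2"
  have "green_weighted (a+t) = (\<Sum>y<a. deg y * green (a+t) y)
    + (\<Sum>t'<k-2. deg (a+t') * green (a+t) (a+t')) + (\<Sum>s<b. deg (c+s) * green (a+t) (c+s))"
    unfolding green_weighted_def by (rule sum_vertices_split)
  also have "(\<Sum>y<a. deg y * green (a+t) y) = 0" using green_A_P t by simp
  also have "(\<Sum>t'<k-2. deg (a+t') * green (a+t) (a+t'))
      = 2 * (\<Sum>t'<k-2. real (min (Suc t) (Suc t')))"
    unfolding sum_distrib_left by (rule sum.cong) (auto simp: deg_path green_P_P t)
  also have "(\<Sum>s<b. deg (c+s) * green (a+t) (c+s))
    = (\<Sum>s<b. (2 + (if s = 0 then 1 else 0)) * real (Suc t))"
    by (rule sum.cong) (auto simp: deg_cycle_b green_P_B t)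
  also have "\<dots> = (2 * real b + 1) * real (Suc t)" unfolding sum_cycle_degree_weighted using b_ge_3
    by (simp add: field_simps)
  finally show ?thesis by simp
qed

lemma green_weighted_cycle_b: "s < b \<Longrightarrow> green_weighted (c+s)
    = (real k - 2) * (real k - 1) + (2 * real b + 1) * (real k - 1) + 2 * (\<Sum>s'<b. cycle_green b s s')"
proof -
  assume s: "s < b"
  have "green_weighted (c+s) = (\<Sum>y<a. deg y * green (c+s) y)
    + (\<Sum>t<k-2. deg (a+t) * green (c+s) (a+t)) + (\<Sum>s'<b. deg (c+s') * green (c+s) (c+s'))"
    unfolding green_weighted_def by (rule sum_vertices_split)
  also have "(\<Sum>y<a. deg y * green (c+s) y) = 0" using green_A_B s by simp
  also have "(\<Sum>t<k-2. deg (a+t) * green (c+s) (a+t)) = 2 * (\<Sum>t<k-2. real (Suc t))"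
    unfolding sum_distrib_left by (rule sum.cong) (auto simp: deg_path green_P_B s)
  also have "\<dots> = (real k - 2) * (real k - 1)" unfolding sum_path_Suc by simp
  also have "(\<Sum>s'<b. deg (c+s') * green (c+s) (c+s'))
    = (\<Sum>s'<b. (2 + (if s' = 0 then 1 else 0)) * (real (k-1) + cycle_green b s s'))"
    by (rule sum.cong) (auto simp: deg_cycle_b green_B_B s)
  also have "\<dots> = (2 * real b + 1) * (real k - 1) + 2 * (\<Sum>s'<b. cycle_green b s s')"
    unfolding sum_cycle_degree_weighted sum.distrib using b_ge_3 k_ge_2
      by (simp add: of_nat_diff field_simps)
  finally show ?thesis by simp
qed

lemma sum_deg_green_weighted_cycle_a:
  "(\<Sum>x<a. deg x * green_weighted x) = real a * (real a * real a - 1) / 3"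
proof -
  have "(\<Sum>x<a. deg x * green_weighted x)
    = (\<Sum>x<a. (2 + (if x = 0 then 1 else 0)) * (2 * (\<Sum>y<a. cycle_green a x y)))"
    by (rule sum.cong) (auto simp: deg_cycle_a green_weighted_cycle_a)
  also have "\<dots> = 4 * (\<Sum>x<a. \<Sum>y<a. cycle_green a x y)" unfolding sum_cycle_degree_weighted
    by (simp add: sum_distrib_left)
  also have "\<dots> = real a * (real a * real a - 1) / 3" using a_ge_3 by (simp add: sum_cycle_green)
  finally show ?thesis .
qed

lemma sum_deg_green_weighted_path:
  "(\<Sum>t<k-2. deg (a+t) * green_weighted (a+t))
      = 2 * (real k - 1) * (real k - 2) * (2 * real k - 3) / 3 + (2 * real b + 1) * (real k - 2) * (real k - 1)"
proof -
  have "(\<Sum>t<k-2. deg (a+t) * green_weighted (a+t))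
    = (\<Sum>t<k-2. 4 * (\<Sum>t'<k-2. real (min (Suc t) (Suc t'))) + 2 * (2 * real b + 1) * real (Suc t))"
  proof (rule sum.cong)
    fix t assume "t \<in> {..<k-2}"
    hence t: "t < k - 2" by simp
    show "deg (a+t) * green_weighted (a+t)
        = 4 * (\<Sum>t'<k-2. real (min (Suc t) (Suc t'))) + 2 * (2 * real b + 1) * real (Suc t)"
      unfolding deg_path[OF t] green_weighted_path[OF t] by (simp add: algebra_simps)
  qed simp
  also have "\<dots> = 4 * (\<Sum>t<k-2. \<Sum>t'<k-2. real (min (Suc t) (Suc t')))
      + 2 * (2 * real b + 1) * (\<Sum>t<k-2. real (Suc t))"
    by (simp only: sum.distrib sum_distrib_left[symmetric])
  also have "(\<Sum>t<k-2. \<Sum>t'<k-2. real (min (Suc t) (Suc t')))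
      = (real k - 1) * (real k - 2) * (2 * real k - 3) / 6"
    unfolding sum_min_Suc_lessThan using k_ge_2 by (simp add: of_nat_diff field_simps)
  finally show ?thesis unfolding sum_path_Suc by (simp add: field_simps)
qed

lemma sum_deg_green_weighted_cycle_b:
  "(\<Sum>s<b. deg (c+s) * green_weighted (c+s))
      = (2 * real b + 1) * ((real k - 2) * (real k - 1) + (2 * real b + 1) * (real k - 1))
        + real b * (real b * real b - 1) / 3"
proof -
  have "(\<Sum>s<b. deg (c+s) * green_weighted (c+s))
    = (\<Sum>s<b. (2 + (if s = 0 then 1 else 0))
      * ((real k - 2) * (real k - 1) + (2 * real b + 1) * (real k - 1)
        + 2 * (\<Sum>s'<b. cycle_green b s s')))"
    by (rule sum.cong) (auto simp: deg_cycle_b green_weighted_cycle_b)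
  also have "\<dots> = 2 * (real b * ((real k - 2) * (real k - 1) + (2 * real b + 1) * (real k - 1))
    + 2 * (\<Sum>s<b. \<Sum>s'<b. cycle_green b s s'))
      + ((real k - 2) * (real k - 1) + (2 * real b + 1) * (real k - 1))"
    unfolding sum_cycle_degree_weighted using b_ge_3 by (simp add: sum.distrib sum_distrib_left)
  also have "(\<Sum>s<b. \<Sum>s'<b. cycle_green b s s') = real b * (real b * real b - 1) / 12"
    using b_ge_3 by (simp add: sum_cycle_green)
  finally show ?thesis by (simp add: field_simps)
qed

lemma sum_deg_green_weighted:
  "(\<Sum>v<n. deg v * green_weighted v) = real a * (real a * real a - 1) / 3
    + 2 * (real k - 1) * (real k - 2) * (2 * real k - 3) / 3
    + 2 * (2 * real b + 1) * (real k - 2) * (real k - 1)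
    + (2 * real b + 1) * (2 * real b + 1) * (real k - 1) + real b * (real b * real b - 1) / 3"
  unfolding sum_vertices_split[of "\<lambda>v. deg v * green_weighted v"] sum_deg_green_weighted_cycle_a
    sum_deg_green_weighted_path sum_deg_green_weighted_cycle_b
  by (simp add: field_simps)

lemma num_arcs_barbell: "num_arcs = 2 * (real a + real b + real k - 1)"
proof -
  have "num_arcs = (\<Sum>v<n. 2 + (if v = 0 then 1 else 0) + (if v = c then 1 else 0))"
    unfolding num_arcs_eq using a_le_c a_ge_3
    by (intro sum.cong) (auto simp: gdeg_barbell barbell_deg_def)
  also have "\<dots> = 2 * real n + 2"
    using c_less_n by (simp add: sum.distrib)
  finally show ?thesis unfolding n_def using a_ge_3 b_ge_3 k_ge_2 by simp
qed

theorem kemeny_edge_cycle_barbell: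
  "kemeny_edge (cb_vertices k a b) (cb_adj k a b) =
    complex_of_real
     (1 / (real a + real b + real k - 1) *
       ((real a + 1) * (real a - 1) / 6 * (real a + 2 * (real b + real k - 1))
      + (real b + 1) * (real b - 1) / 6 * (real b + 2 * (real a + real k - 1))
      + (real a + real b) * (real k - 1)^2
      + (real k - 1) * (2 * (real k)^2 - 4 * real k + 3) / 6
      + 2 * real a * real b * (real k - 1))
     + real a + real b + real k)"
proof -
  have vertices: "cb_vertices k a b = {..<n}" unfolding cb_vertices_def n_def by simp
  have "real n = real a + real b + real k - 2" unfolding n_def using k_ge_2 by simp
  moreover have "real a + real b + real k - 1 > 0" using a_ge_3 by simp
  ultimately show ?thesis
    unfolding vertices kemeny_edge_eq_green num_arcs_barbell sum_deg_green_diag sum_deg_green_weighted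
    by (intro arg_cong[where f = complex_of_real]) (simp add: field_simps power2_eq_square)
qed

end

theorem corollary5p3:
  fixes a b k :: nat
  assumes "a \<ge> 3" and "b \<ge> 3" and "k \<ge> 2"
  shows "kemeny_edge (cb_vertices k a b) (cb_adj k a b) =
    complex_of_real
     (1 / (real a + real b + real k - 1) *
       ((real a + 1) * (real a - 1) / 6 * (real a + 2 * (real b + real k - 1))
      + (real b + 1) * (real b - 1) / 6 * (real b + 2 * (real a + real k - 1))
      + (real a + real b) * (real k - 1)^2
      + (real k - 1) * (2 * (real k)^2 - 4 * real k + 3) / 6
      + 2 * real a * real b * (real k - 1))
     + real a + real b + real k)"
proof -
  interpret cycle_barbell a b k using assms by unfold_locales
  show ?thesis by (rule kemeny_edge_cycle_barbell)
qed

end
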